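(* Let $X=(X_n)_{n\in\mathbb{Z}}$ be a stationary and ergodic sequence of integer-valued random variables whose common mean $\mathbb{E}[X_0]\in[-\infty,\infty]$ exists. Let $\mathbb{Z}^R_X$ be the record graph of $X$. \begin{enumerate} \item If $\mathbb{E}[X_0]<0$, then almost surely every connected component of $\mathbb{Z}^R_X$ is of class $\mathcal{F}/\mathcal{F}$. \item If $\mathbb{E}[X_0]>0$, then almost surely $\mathbb{Z}^R_X$ is connected and of class $\mathcal{I}/\mathcal{F}$. \item If $\mathbb{E}[X_0]=0$, then almost surely $\mathbb{Z}^R_X$ is connected and is either of class $\mathcal{I}/\mathcal{F}$ or of class $\mathcal{I}/\mathcal{I}$. \end{enumerate}
   Context: For a sequence $x=(x_n)_{n\in\mathbb{Z}}$ write $y(j,k)=\sum_{l=j}^{k-1}x_l$ for integers $j<k$. The record map is $R_x(i)=\inf\{n>i: y(i,n)\ge 0\}$ if this set is nonempty, and $R_x(i)=i$ otherwise. The record graph $\mathbb{Z}^R_x$ is the directed graph with vertex set $\mathbb{Z}$ and a directed edge $i\to R_x(i)$ for every $i$ with $R_x(i)\neq i$; "connected" refers to the underlying undirected graph. For a connected component $C$ of the record graph, two vertices $u,v\in C$ are in the same foil if $R_x^n(u)=R_x^n(v)$ for some $n\ge 1$. The component $C$ is of class $\mathcal{F}/\mathcal{F}$ if it is finite; of class $\mathcal{I}/\mathcal{I}$ if it is infinite and all its foils are infinite; of class $\mathcal{I}/\mathcal{F}$ if it is infinite and all its foils are finite. A connected record graph is said to be of a class if its single component is. *)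

theory Defs
  imports "HOL-Probability.Probability"
begin

definition ysum :: "(int \<Rightarrow> int) \<Rightarrow> int \<Rightarrow> int \<Rightarrow> int" where
  "ysum x j k = (\<Sum>l\<in>{j..<k}. x l)"

text \<open>Record map: R(i) = inf{n > i : y(i,n) >= 0} if nonempty, else i.
  For a nonempty set of integers bounded below by i, the infimum is its least element.\<close>
definition record_map :: "(int \<Rightarrow> int) \<Rightarrow> int \<Rightarrow> int" where
  "record_map x i = (if \<exists>n>i. ysum x i n \<ge> 0
                      then (LEAST n. n > i \<and> ysum x i n \<ge> 0) else i)"

definition record_edges :: "(int \<Rightarrow> int) \<Rightarrow> (int \<times> int) set" where
  "record_edges x = {(i, record_map x i) | i. record_map x i \<noteq> i}"

definition rg_connected_rel :: "(int \<Rightarrow> int) \<Rightarrow> (int \<times> int) set" where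
  "rg_connected_rel x = (record_edges x \<union> (record_edges x)\<inverse>)\<^sup>*"

definition rg_component :: "(int \<Rightarrow> int) \<Rightarrow> int \<Rightarrow> int set" where
  "rg_component x v = {u. (v, u) \<in> rg_connected_rel x}"

definition rg_components :: "(int \<Rightarrow> int) \<Rightarrow> int set set" where
  "rg_components x = range (rg_component x)"

definition rg_connected :: "(int \<Rightarrow> int) \<Rightarrow> bool" where
  "rg_connected x \<longleftrightarrow> (\<forall>u v. (u, v) \<in> rg_connected_rel x)"

definition foil :: "(int \<Rightarrow> int) \<Rightarrow> int set \<Rightarrow> int \<Rightarrow> int set" where
  "foil x C u = {v \<in> C. \<exists>n\<ge>1. (record_map x ^^ n) u = (record_map x ^^ n) v}"

definition class_FF :: "(int \<Rightarrow> int) \<Rightarrow> int set \<Rightarrow> bool" where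
  "class_FF x C \<longleftrightarrow> finite C"

definition class_II :: "(int \<Rightarrow> int) \<Rightarrow> int set \<Rightarrow> bool" where
  "class_II x C \<longleftrightarrow> infinite C \<and> (\<forall>u\<in>C. infinite (foil x C u))"

definition class_IF :: "(int \<Rightarrow> int) \<Rightarrow> int set \<Rightarrow> bool" where
  "class_IF x C \<longleftrightarrow> infinite C \<and> (\<forall>u\<in>C. finite (foil x C u))"

abbreviation seq_space :: "(int \<Rightarrow> int) measure" where
  "seq_space \<equiv> PiM UNIV (\<lambda>_. count_space UNIV)"

definition shift :: "(int \<Rightarrow> int) \<Rightarrow> (int \<Rightarrow> int)" where
  "shift f = (\<lambda>n. f (n + 1))"

definition law :: "'a measure \<Rightarrow> (int \<Rightarrow> 'a \<Rightarrow> int) \<Rightarrow> (int \<Rightarrow> int) measure" where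
  "law M X = distr M seq_space (\<lambda>\<omega> n. X n \<omega>)"

definition stationary :: "'a measure \<Rightarrow> (int \<Rightarrow> 'a \<Rightarrow> int) \<Rightarrow> bool" where
  "stationary M X \<longleftrightarrow> distr (law M X) seq_space shift = law M X"

definition ergodic :: "'a measure \<Rightarrow> (int \<Rightarrow> 'a \<Rightarrow> int) \<Rightarrow> bool" where
  "ergodic M X \<longleftrightarrow> (\<forall>A \<in> sets seq_space. shift -` A \<inter> space seq_space = A \<longrightarrow>
       emeasure (law M X) A = 0 \<or> emeasure (law M X) A = 1)"

definition mean_pos :: "'a measure \<Rightarrow> ('a \<Rightarrow> int) \<Rightarrow> ennreal" where
  "mean_pos M f = (\<integral>\<^sup>+ \<omega>. ennreal (real_of_int (max 0 (f \<omega>))) \<partial>M)"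

definition mean_neg :: "'a measure \<Rightarrow> ('a \<Rightarrow> int) \<Rightarrow> ennreal" where
  "mean_neg M f = (\<integral>\<^sup>+ \<omega>. ennreal (real_of_int (max 0 (- f \<omega>))) \<partial>M)"

definition mean_exists :: "'a measure \<Rightarrow> ('a \<Rightarrow> int) \<Rightarrow> bool" where
  "mean_exists M f \<longleftrightarrow> mean_pos M f \<noteq> \<infinity> \<or> mean_neg M f \<noteq> \<infinity>"

definition ext_mean :: "'a measure \<Rightarrow> ('a \<Rightarrow> int) \<Rightarrow> ereal" where
  "ext_mean M f = enn2ereal (mean_pos M f) - enn2ereal (mean_neg M f)"

end

(*
  Let S be the walk with increments x, normalised by S 0 = 0; the record map sends i to the first
  time after i at which S is back at level S i or above.

  If the mean is negative, Birkhoff's theorem (proved below from the maximal ergodic inequality)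
  makes S drift to -infinity forwards and to +infinity backwards. The supremum of S after a
  vertex is then finite and constant along edges, and this traps every component in a bounded
  interval.

  If the mean is positive, the drifts are reversed. The record map then has no fixed points, so
  any two orbits merge and the graph is connected. Moreover there are "past maxima" (times at
  which S dominates its whole past) arbitrarily far to the left, and orbits from the left pass
  through them; this bounds every foil from below. A mass-transport argument (stationarity plus
  Borel-Cantelli) shows that foils bounded below are almost surely finite.

  If the mean is zero, a fixed point of the record map at 0 would keep the Birkhoff sums of
  x 0 + 1{R 0 = 0} nonpositive although their mean is positive; hence again there are no fixed
  points. By shift covariance, the set of past maxima and the lowest foil are almost surely either
  empty or unbounded below. If past maxima exist, foils are finite as before; if not, a finite foil
  would make the lowest foil finite and nonempty, so every foil is infinite.
*)

theory Submission
  imports Defs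
begin

lemma int_Least_bounded_below:
  fixes P :: "int \<Rightarrow> bool"
  assumes "P n" and bound: "\<And>m. P m \<Longrightarrow> i < m"
  shows "P (LEAST m. P m)" "\<And>m. P m \<Longrightarrow> (LEAST m. P m) \<le> m"
proof -
  define d where "d = (LEAST d :: nat. P (i + int d))"
  have "P (i + int (nat (n - i)))" using assms(1) bound[OF assms(1)] by simp
  then have Pd: "P (i + int d)" unfolding d_def by (rule LeastI)
  have "i + int d \<le> m" if "P m" for m
  proof -
    have "P (i + int (nat (m - i)))" using that bound[OF that] by simp
    then have "d \<le> nat (m - i)" unfolding d_def by (rule Least_le)
    then show ?thesis using bound[OF that] by linarith
  qed
  then have "(LEAST m. P m) = i + int d" using Pd by (intro Least_equality)
  then show "P (LEAST m. P m)" "\<And>m. P m \<Longrightarrow> (LEAST m. P m) \<le> m"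
    using Pd \<open>\<And>m. P m \<Longrightarrow> i + int d \<le> m\<close> by simp_all
qed

lemma funpow_split_le: "k \<le> n \<Longrightarrow> (f ^^ n) y = (f ^^ (n - k)) ((f ^^ k) y)"
  by (metis funpow_add le_add_diff_inverse2 o_apply)

lemma funpow_eq_mono:
  fixes f :: "'a \<Rightarrow> 'a"
  shows "(f ^^ n) u = (f ^^ n) v \<Longrightarrow> n \<le> m \<Longrightarrow> (f ^^ m) u = (f ^^ m) v"
  using funpow_split_le[of n m f u] funpow_split_le[of n m f v] by simp

lemma funpow_apply_funpow: "(f ^^ m) ((f ^^ n) y) = (f ^^ (m + n)) y"
  by (simp add: funpow_add)

lemma all_less_add_iff: "(\<forall>w<a. P (w + k)) \<longleftrightarrow> (\<forall>w<a + k. P w)" for a k :: int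
proof
  assume H: "\<forall>w<a. P (w + k)"
  show "\<forall>w<a + k. P w"
  proof (intro allI impI)
    fix w assume "w < a + k"
    then show "P w" using H[rule_format, of "w - k"] by simp
  qed
qed simp

lemma all_ex_uminus_less_iff:
  fixes f :: "int \<Rightarrow> int"
  shows "(\<forall>V. \<exists>N. \<forall>n. P N n \<longrightarrow> - f n < V) \<longleftrightarrow> (\<forall>V. \<exists>N. \<forall>n. P N n \<longrightarrow> V < f n)"
proof
  assume H: "\<forall>V. \<exists>N. \<forall>n. P N n \<longrightarrow> - f n < V"
  show "\<forall>V. \<exists>N. \<forall>n. P N n \<longrightarrow> V < f n"
  proof
    fix V
    obtain N where "\<forall>n. P N n \<longrightarrow> - f n < - V" using H by blast
    then show "\<exists>N. \<forall>n. P N n \<longrightarrow> V < f n" by auto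
  qed
next
  assume H: "\<forall>V. \<exists>N. \<forall>n. P N n \<longrightarrow> V < f n"
  show "\<forall>V. \<exists>N. \<forall>n. P N n \<longrightarrow> - f n < V"
  proof
    fix V
    obtain N where "\<forall>n. P N n \<longrightarrow> - V < f n" using H by blast
    then show "\<exists>N. \<forall>n. P N n \<longrightarrow> - f n < V" by (meson minus_less_iff)
  qed
qed

lemma tends_to_bot_int_of_nat:
  fixes g :: "int \<Rightarrow> int"
  assumes "\<forall>V. \<exists>N. \<forall>n\<ge>N. real_of_int (g (int n)) < V"
  shows "\<forall>V. \<exists>N. \<forall>n\<ge>N. g n < V"
proof
  fix V
  obtain N where N: "\<forall>n\<ge>N. real_of_int (g (int n)) < real_of_int V" using assms by blast
  have "g n < V" if "int N \<le> n" for n using N[rule_format, of "nat n"] that by simp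
  then show "\<exists>N. \<forall>n\<ge>N. g n < V" by blast
qed

definition psum :: "(int \<Rightarrow> int) \<Rightarrow> int \<Rightarrow> int" where
  "psum x n = (if 0 \<le> n then ysum x 0 n else - ysum x n 0)"

lemma ysum_empty [simp]: "ysum x i i = 0"
  unfolding ysum_def by simp

lemma ysum_split:
  assumes "i \<le> m" "m \<le> n"
  shows "ysum x i n = ysum x i m + ysum x m n"
proof -
  have "{i..<n} = {i..<m} \<union> {m..<n}" using assms by auto
  then show ?thesis unfolding ysum_def by (simp add: sum.union_disjoint)
qed

lemma ysum_eq_psum_diff:
  assumes "i \<le> n"
  shows "ysum x i n = psum x n - psum x i"
  using assms ysum_split[of 0 i n x] ysum_split[of i 0 n x] ysum_split[of i n 0 x]
  by (auto simp: psum_def)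

lemma psum_succ: "psum x (n + 1) = psum x n + x n"
proof -
  have "{n..<n + 1} = {n}" by auto
  then have "ysum x n (n + 1) = x n" unfolding ysum_def by simp
  then show ?thesis using ysum_eq_psum_diff[of n "n + 1" x] by simp
qed

lemma psum_nat: "psum x (int n) = (\<Sum>k<n. x (int k))"
proof (induction n)
  case (Suc n)
  then show ?case using psum_succ[of x "int n"] by (simp add: add.commute)
qed (simp add: psum_def)

lemma psum_neg_nat: "psum x (- int n) = - (\<Sum>k<n. x (- 1 - int k))"
proof (induction n)
  case (Suc n)
  then show ?case using psum_succ[of x "- 1 - int n"] by simp
qed (simp add: psum_def)

lemma record_map_psum:
  "record_map x i =
     (if \<exists>n>i. psum x i \<le> psum x n then LEAST n. i < n \<and> psum x i \<le> psum x n else i)"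
proof -
  have "(\<lambda>n. i < n \<and> 0 \<le> ysum x i n) = (\<lambda>n. i < n \<and> psum x i \<le> psum x n)"
    using ysum_eq_psum_diff[of i _ x] by fastforce
  then show ?thesis unfolding record_map_def by (simp only:)
qed

lemma record_map_least:
  assumes "\<exists>n>i. psum x i \<le> psum x n"
  shows "i < record_map x i" "psum x i \<le> psum x (record_map x i)"
    "\<And>n. i < n \<Longrightarrow> psum x i \<le> psum x n \<Longrightarrow> record_map x i \<le> n"
proof -
  obtain n where "i < n" "psum x i \<le> psum x n" using assms by blast
  note least = int_Least_bounded_below[of "\<lambda>n. i < n \<and> psum x i \<le> psum x n" n i]
  have "record_map x i = (LEAST n. i < n \<and> psum x i \<le> psum x n)"
    using assms by (simp add: record_map_psum)
  then show "i < record_map x i" "psum x i \<le> psum x (record_map x i)"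
    "\<And>n. i < n \<Longrightarrow> psum x i \<le> psum x n \<Longrightarrow> record_map x i \<le> n"
    using least \<open>i < n\<close> \<open>psum x i \<le> psum x n\<close> by auto
qed

lemma record_map_eq_self_iff: "record_map x i = i \<longleftrightarrow> \<not> (\<exists>n>i. psum x i \<le> psum x n)"
proof
  show "record_map x i = i \<Longrightarrow> \<not> (\<exists>n>i. psum x i \<le> psum x n)"
    using record_map_least(1)[of i x] by auto
qed (auto simp: record_map_psum)

lemma record_map_ge: "i \<le> record_map x i"
  using record_map_least(1)[of i x] record_map_eq_self_iff[of x i] by fastforce

lemma psum_record_map_ge: "psum x i \<le> psum x (record_map x i)"
  using record_map_least(2)[of i x] record_map_eq_self_iff[of x i] by fastforce

lemma record_map_le: "i < n \<Longrightarrow> psum x i \<le> psum x n \<Longrightarrow> record_map x i \<le> n"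
  using record_map_least(3) by blast

lemma psum_le_before_record_map:
  assumes "i \<le> m" "m < record_map x i"
  shows "psum x m \<le> psum x i"
  using assms record_map_le[of i m x] by (metis le_less linorder_not_le)

lemma psum_less_after_fixed_point:
  assumes "record_map x k = k" "k < m"
  shows "psum x m < psum x k"
  using assms record_map_eq_self_iff[of x k] by auto

lemma psum_plus_card_fixed_points_le:
  assumes "record_map x 0 = 0"
  shows "psum x (int n) + int (card {k. k < n \<and> record_map x (int k) = int k}) \<le> 0"
proof (induction n rule: less_induct)
  case (less n)
  define J where "J = {k. k < n \<and> record_map x (int k) = int k}"
  show ?case
  proof (cases "n = 0")
    case False
    then have "0 \<in> J" "finite J" using assms unfolding J_def by auto
    define j where "j = Max J"
    have "j \<in> J" unfolding j_def using \<open>0 \<in> J\<close> \<open>finite J\<close> by (intro Max_in) auto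
    then have j: "j < n" "record_map x (int j) = int j" unfolding J_def by auto
    have "J = insert j {k. k < j \<and> record_map x (int k) = int k}"
      using Max_ge[OF \<open>finite J\<close>] j unfolding J_def j_def by fastforce
    then have "card J = card {k. k < j \<and> record_map x (int k) = int k} + 1" by simp
    moreover have "psum x (int n) < psum x (int j)"
      using psum_less_after_fixed_point[OF j(2)] j(1) by simp
    ultimately show ?thesis using less.IH[OF j(1)] unfolding J_def by linarith
  qed (simp add: psum_def)
qed

lemma record_map_eq_iff:
  "record_map x i = a \<longleftrightarrow> (a = i \<and> (\<forall>n>i. psum x n < psum x i)) \<or>
     (i < a \<and> psum x i \<le> psum x a \<and> (\<forall>m. i < m \<and> m < a \<longrightarrow> psum x m < psum x i))"
  using record_map_least[of i x] record_map_eq_self_iff[of x i] psum_le_before_record_map[of i _ x]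
  by (smt (verit, best))

section \<open>Orbits of the record map and connectivity\<close>

lemma funpow_record_map_ge: "i \<le> (record_map x ^^ k) i"
  by (induction k) (auto intro: order_trans[OF _ record_map_ge])

lemma psum_funpow_record_map_mono:
  "k \<le> l \<Longrightarrow> psum x ((record_map x ^^ k) i) \<le> psum x ((record_map x ^^ l) i)"
proof (induction l)
  case (Suc l)
  then show ?case
    using psum_record_map_ge[of x "(record_map x ^^ l) i"] by (cases "k = Suc l") auto
qed simp

text \<open>A vertex whose value dominates the walk since time \<open>i\<close> lies on the orbit of \<open>i\<close>:
  every jump of the record map stops at or before it.\<close>

lemma record_orbit_reaches:
  assumes "i \<le> n" "\<forall>m. i \<le> m \<and> m < n \<longrightarrow> psum x m \<le> psum x n"
  shows "\<exists>k. (record_map x ^^ k) i = n"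
  using assms
proof (induction "nat (n - i)" arbitrary: i rule: less_induct)
  case less
  show ?case
  proof (cases "i = n")
    case True
    then show ?thesis by (metis funpow_0)
  next
    case False
    then have "i < n" "psum x i \<le> psum x n" using less.prems by auto
    then have "i < record_map x i" "record_map x i \<le> n"
      using record_map_least(1) record_map_le by blast+
    moreover have "nat (n - record_map x i) < nat (n - i)" using \<open>i < record_map x i\<close> \<open>i < n\<close> by simp
    ultimately obtain k where "(record_map x ^^ k) (record_map x i) = n"
      using less by (metis order.trans order.strict_implies_order)
    then have "(record_map x ^^ Suc k) i = n" by (simp add: funpow_Suc_right del: funpow.simps)
    then show ?thesis by blast
  qed
qed

lemma psum_le_on_orbit:
  assumes "(record_map x ^^ k) w = v" "w \<le> t" "t < v"
  shows "psum x t \<le> psum x v"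
  using assms
proof (induction k arbitrary: w)
  case (Suc k)
  have v: "(record_map x ^^ k) (record_map x w) = v"
    using Suc.prems(1) by (simp add: funpow_Suc_right del: funpow.simps)
  show ?case
  proof (cases "record_map x w \<le> t")
    case True
    then show ?thesis using Suc.IH[OF v True] Suc.prems by simp
  next
    case False
    then have "psum x t \<le> psum x w" using psum_le_before_record_map Suc.prems by simp
    also have "\<dots> \<le> psum x (record_map x w)" by (rule psum_record_map_ge)
    also have "\<dots> \<le> psum x v" using psum_funpow_record_map_mono[of 0 k x "record_map x w"] v by simp
    finally show ?thesis .
  qed
qed simp

definition no_fixed_points :: "(int \<Rightarrow> int) \<Rightarrow> bool" where
  "no_fixed_points x \<longleftrightarrow> (\<forall>i. record_map x i \<noteq> i)"

lemma no_fixed_points_record_map_gt: "no_fixed_points x \<Longrightarrow> i < record_map x i"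
  using record_map_ge[of i x] unfolding no_fixed_points_def by (metis order_le_neq_trans)

lemma no_fixed_points_funpow_record_map_ge:
  "no_fixed_points x \<Longrightarrow> i + int k \<le> (record_map x ^^ k) i"
proof (induction k)
  case (Suc k)
  then show ?case using no_fixed_points_record_map_gt[of x "(record_map x ^^ k) i"] by simp
qed simp

lemma no_fixed_points_funpow_record_map_inj:
  assumes "no_fixed_points x" "(record_map x ^^ k) i = (record_map x ^^ l) i"
  shows "k = l"
proof -
  have "strict_mono (\<lambda>k. (record_map x ^^ k) i)"
    by (rule strict_monoI_Suc) (simp add: no_fixed_points_record_map_gt[OF assms(1)])
  then show ?thesis using assms(2) by (metis strict_mono_eq)
qed

text \<open>For \<open>i \<le> j\<close> both orbits pass through the first time after \<open>j\<close> at which the walk reaches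
  its maximum over \<open>[i, j]\<close>; such a time exists because the orbit of a maximiser climbs past \<open>j\<close>.\<close>

lemma record_orbits_meet_ordered:
  assumes "no_fixed_points x" "i \<le> j"
  shows "\<exists>a b. (record_map x ^^ a) i = (record_map x ^^ b) j"
proof -
  define V where "V = Max (psum x ` {i..j})"
  have "V \<in> psum x ` {i..j}" unfolding V_def using assms(2) by (intro Max_in) auto
  then obtain m0 where m0: "m0 \<in> {i..j}" "psum x m0 = V" by auto
  have V_ge: "psum x m \<le> V" if "m \<in> {i..j}" for m unfolding V_def using that by simp
  define P where "P n \<longleftrightarrow> j - 1 < n \<and> V \<le> psum x n" for n
  define c where "c = (record_map x ^^ (nat (j - m0) + 1)) m0"
  have "j < c" using no_fixed_points_funpow_record_map_ge[OF assms(1), of m0 "nat (j - m0) + 1"] m0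
    unfolding c_def by simp
  moreover have "V \<le> psum x c"
    unfolding c_def using psum_funpow_record_map_mono[of 0 "nat (j - m0) + 1" x m0] m0 by simp
  ultimately have "P c" unfolding P_def by simp
  define n where "n = (LEAST n. P n)"
  have bound: "\<And>m. P m \<Longrightarrow> j - 1 < m" unfolding P_def by simp
  have least: "P n" "\<And>m. P m \<Longrightarrow> n \<le> m"
    unfolding n_def using int_Least_bounded_below[of P c "j - 1"] \<open>P c\<close> bound by blast+
  have "psum x m \<le> psum x n" if "i \<le> m" "m < n" for m
  proof (cases "m \<le> j")
    case True
    then show ?thesis using V_ge[of m] that least(1) P_def by auto
  next
    case False
    have "\<not> P m" using least(2)[of m] that(2) by linarith
    then show ?thesis using False least(1) unfolding P_def by auto
  qed
  then have "\<exists>a. (record_map x ^^ a) i = n" "\<exists>b. (record_map x ^^ b) j = n"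
    using least(1) assms(2) unfolding P_def by (auto intro!: record_orbit_reaches)
  then show ?thesis by metis
qed

lemma record_orbits_meet:
  assumes "no_fixed_points x"
  shows "\<exists>a b. (record_map x ^^ a) i = (record_map x ^^ b) j"
  using record_orbits_meet_ordered[OF assms, of i j] record_orbits_meet_ordered[OF assms, of j i]
  by (metis linorder_linear)

lemma orbit_in_rtrancl_record_edges: "(i, (record_map x ^^ k) i) \<in> (record_edges x)\<^sup>*"
proof (induction k)
  case (Suc k)
  have "((record_map x ^^ k) i, record_map x ((record_map x ^^ k) i)) \<in> (record_edges x)\<^sup>="
    unfolding record_edges_def by auto
  then show ?case using Suc by (auto intro: rtrancl_into_rtrancl)
qed simp

lemma no_fixed_points_rg_connected:
  assumes "no_fixed_points x"
  shows "rg_connected x"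
  unfolding rg_connected_def
proof (intro allI)
  fix u v
  let ?E = "record_edges x"
  obtain a b where ab: "(record_map x ^^ a) u = (record_map x ^^ b) v"
    using record_orbits_meet[OF assms] by blast
  have "(u, (record_map x ^^ a) u) \<in> (?E \<union> ?E\<inverse>)\<^sup>*"
    using orbit_in_rtrancl_record_edges rtrancl_mono[of ?E "?E \<union> ?E\<inverse>"] by blast
  moreover have "((record_map x ^^ b) v, v) \<in> (?E \<union> ?E\<inverse>)\<^sup>*"
    using orbit_in_rtrancl_record_edges[of v b x] rtrancl_mono[of "?E\<inverse>" "?E \<union> ?E\<inverse>"]
    by (auto simp: rtrancl_converse)
  ultimately show "(u, v) \<in> rg_connected_rel x" unfolding rg_connected_rel_def using ab by simp
qed

lemma rg_component_UNIV: "rg_connected x \<Longrightarrow> rg_component x w = UNIV"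
  unfolding rg_connected_def rg_component_def by auto

lemma bdd_above_psum_from:
  assumes "\<forall>V. \<exists>N. \<forall>n\<ge>N. psum x n < V"
  shows "bdd_above (psum x ` {i..})"
proof -
  obtain N where N: "\<forall>n\<ge>N. psum x n < 0" using assms by blast
  have "psum x n \<in> psum x ` {i..<N} \<union> {..0}" if "i \<le> n" for n
    using N that by (cases "n < N") (auto simp: less_imp_le)
  then have "psum x ` {i..} \<subseteq> psum x ` {i..<N} \<union> {..0}" by auto
  moreover have "bdd_above (psum x ` {i..<N} \<union> {..0})" by simp
  ultimately show ?thesis by (meson bdd_above_mono)
qed

lemma Sup_psum_from_record_map:
  assumes bdd: "\<And>i. bdd_above (psum x ` {i..})"
  shows "Sup (psum x ` {record_map x i..}) = Sup (psum x ` {i..})"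
proof (rule antisym)
  show "Sup (psum x ` {record_map x i..}) \<le> Sup (psum x ` {i..})"
    using record_map_ge[of i x] bdd by (intro cSup_subset_mono) auto
  show "Sup (psum x ` {i..}) \<le> Sup (psum x ` {record_map x i..})"
  proof (rule cSup_least)
    fix s assume "s \<in> psum x ` {i..}"
    then obtain n where n: "i \<le> n" "s = psum x n" by auto
    show "s \<le> Sup (psum x ` {record_map x i..})"
    proof (cases "record_map x i \<le> n")
      case True
      then show ?thesis using n bdd by (auto intro: cSup_upper)
    next
      case False
      then have "psum x n \<le> psum x (record_map x i)"
        using psum_le_before_record_map[of i n x] psum_record_map_ge[of x i] n by simp
      also have "\<dots> \<le> Sup (psum x ` {record_map x i..})" using bdd by (auto intro: cSup_upper)
      finally show ?thesis using n by simp
    qed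
  qed simp
qed

lemma Sup_psum_from_constant_on_component:
  assumes bdd: "\<And>i. bdd_above (psum x ` {i..})" and "u \<in> rg_component x w"
  shows "Sup (psum x ` {u..}) = Sup (psum x ` {w..})"
proof -
  have "(w, u) \<in> (record_edges x \<union> (record_edges x)\<inverse>)\<^sup>*"
    using assms(2) unfolding rg_component_def rg_connected_rel_def by simp
  then show ?thesis
  proof (induction rule: rtrancl_induct)
    case (step y z)
    then show ?case unfolding record_edges_def using Sup_psum_from_record_map[OF bdd] by auto
  qed simp
qed

text \<open>The supremum of the walk after a vertex is invariant along edges, and it pins the
  vertices of a component between the last time the walk exceeds it in the past and the first
  time the walk stays below it in the future.\<close>

lemma rg_component_finite:
  assumes down: "\<forall>V. \<exists>N. \<forall>n\<ge>N. psum x n < V" and up: "\<forall>V. \<exists>N. \<forall>n\<le>N. V < psum x n"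
  shows "finite (rg_component x w)"
proof -
  define f where "f i = Sup (psum x ` {i..})" for i
  have bdd: "bdd_above (psum x ` {i..})" for i using bdd_above_psum_from[OF down] .
  obtain N where N: "\<forall>n\<ge>N. psum x n < f w" using down by blast
  obtain m where m: "\<forall>n\<le>m. f w < psum x n" using up by blast
  have "rg_component x w \<subseteq> {m<..<N}"
  proof
    fix u assume "u \<in> rg_component x w"
    then have fu: "f u = f w" unfolding f_def by (rule Sup_psum_from_constant_on_component[OF bdd])
    have "psum x u \<le> f u" unfolding f_def using bdd by (auto intro: cSup_upper)
    then have "m < u" using m fu by (metis linorder_not_le order_less_irrefl order.strict_trans1)
    moreover have "\<not> N \<le> u"
    proof
      assume "N \<le> u"
      then have "f u \<le> f w - 1" unfolding f_def[of u] using N by (intro cSup_least) force+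
      then show False using fu by simp
    qed
    ultimately show "u \<in> {m<..<N}" by simp
  qed
  then show ?thesis by (rule finite_subset) simp
qed

section \<open>Past maxima and foils\<close>

definition past_maxima :: "(int \<Rightarrow> int) \<Rightarrow> int set" where
  "past_maxima x = {j. \<forall>m<j. psum x m \<le> psum x j}"

lemma no_fixed_points_if_psum_tends_to_top:
  assumes "\<forall>V. \<exists>N. \<forall>n\<ge>N. V < psum x n"
  shows "no_fixed_points x"
  unfolding no_fixed_points_def
proof
  fix i
  obtain N where "\<forall>n\<ge>N. psum x i < psum x n" using assms by blast
  then have "psum x i \<le> psum x (max N (i + 1))" by (simp add: less_imp_le)
  then show "record_map x i \<noteq> i" unfolding record_map_eq_self_iff by force
qed

lemma past_maxima_unbounded_below:
  assumes "\<forall>V. \<exists>N. \<forall>n\<le>N. psum x n < V"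
  shows "\<not> bdd_below (past_maxima x)"
  unfolding bdd_below_def
proof
  assume "\<exists>M. \<forall>j\<in>past_maxima x. M \<le> j"
  then obtain M where M: "\<forall>j\<in>past_maxima x. M \<le> j" by blast
  obtain N' where N': "\<forall>n\<le>N'. psum x n < psum x (M - 1)" using assms by blast
  define N where "N = min N' (M - 2)"
  have "Max (psum x ` {N..M - 1}) \<in> psum x ` {N..M - 1}" by (intro Max_in) (auto simp: N_def)
  then obtain j where j: "j \<in> {N..M - 1}" "psum x j = Max (psum x ` {N..M - 1})" by auto
  have "psum x m \<le> psum x j" if "m < j" for m
  proof (cases "N \<le> m")
    case True
    then show ?thesis using j that by simp
  next
    case False
    then have "psum x m < psum x (M - 1)" using N' N_def by simp
    also have "psum x (M - 1) \<le> psum x j" using j N_def by simp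
    finally show ?thesis by simp
  qed
  then have "j \<in> past_maxima x" unfolding past_maxima_def by simp
  then show False using M j by fastforce
qed

lemma in_foil_UNIV_iff: "v \<in> foil x UNIV u \<longleftrightarrow> (\<exists>n\<ge>1. (record_map x ^^ n) u = (record_map x ^^ n) v)"
  unfolding foil_def by simp

lemma foil_UNIV_refl: "u \<in> foil x UNIV u"
  unfolding in_foil_UNIV_iff by auto

lemma foil_UNIV_sym: "v \<in> foil x UNIV u \<Longrightarrow> u \<in> foil x UNIV v"
  unfolding in_foil_UNIV_iff by auto

lemma foil_UNIV_trans: "v \<in> foil x UNIV u \<Longrightarrow> w \<in> foil x UNIV v \<Longrightarrow> w \<in> foil x UNIV u"
  unfolding in_foil_UNIV_iff by (metis funpow_eq_mono le_add1 le_add2 trans_le_add1)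

lemma foil_UNIV_eq: "v \<in> foil x UNIV u \<Longrightarrow> foil x UNIV v = foil x UNIV u"
  using foil_UNIV_trans foil_UNIV_sym by blast

lemma foil_UNIV_same_level:
  assumes nf: "no_fixed_points x" and v: "v \<in> foil x UNIV u"
    and ab: "(record_map x ^^ a) v = (record_map x ^^ b) u"
  shows "a = b"
proof -
  let ?R = "record_map x"
  obtain n where n: "(?R ^^ n) u = (?R ^^ n) v" using v unfolding in_foil_UNIV_iff by auto
  define N where "N = n + a + b"
  define w where "w = (?R ^^ a) v"
  have "(?R ^^ (N - a)) w = (?R ^^ N) v"
    unfolding w_def by (rule funpow_split_le[symmetric]) (simp add: N_def)
  also have "\<dots> = (?R ^^ N) u" using funpow_eq_mono[OF n, of N] unfolding N_def by simp
  also have "\<dots> = (?R ^^ (N - b)) w"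
    unfolding w_def ab by (rule funpow_split_le) (simp add: N_def)
  finally have "N - a = N - b" using no_fixed_points_funpow_record_map_inj[OF nf] by metis
  then show ?thesis unfolding N_def by simp
qed

text \<open>As past maxima exist arbitrarily far to the left, vertices far enough to the left need
  arbitrarily many steps to reach a given past maximum; this is what bounds foils from below.\<close>

lemma past_maximum_reached_late:
  assumes j0: "j0 \<in> past_maxima x" and unb: "\<not> bdd_below (past_maxima x)"
  shows "\<exists>B. \<forall>v\<le>B. \<exists>a\<ge>r. (record_map x ^^ a) v = j0"
proof (induction r)
  case 0
  have "\<exists>a. (record_map x ^^ a) v = j0" if "v \<le> j0" for v
    using j0 that unfolding past_maxima_def by (intro record_orbit_reaches) auto
  then show ?case by blast
next
  case (Suc r)
  then obtain B where B: "\<forall>v\<le>B. \<exists>a\<ge>r. (record_map x ^^ a) v = j0" by blast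
  obtain j where j: "j < B + 1" "j \<in> past_maxima x"
    using unb unfolding bdd_below_def by (meson not_le)
  have "\<exists>a\<ge>Suc r. (record_map x ^^ a) v = j0" if v: "v \<le> j - 1" for v
  proof -
    have "\<forall>m. v \<le> m \<and> m < j \<longrightarrow> psum x m \<le> psum x j"
      using j(2) unfolding past_maxima_def by blast
    then obtain a1 where a1: "(record_map x ^^ a1) v = j"
      using record_orbit_reaches[of v j x] v by auto
    have "a1 \<noteq> 0"
    proof
      assume "a1 = 0"
      then show False using a1 v by simp
    qed
    obtain a2 where a2: "a2 \<ge> r" "(record_map x ^^ a2) j = j0" using B j by auto
    have "(record_map x ^^ (a2 + a1)) v = j0" using a1 a2 by (simp add: funpow_add)
    then show ?thesis using \<open>a1 \<noteq> 0\<close> a2(1) by (intro exI[of _ "a2 + a1"]) auto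
  qed
  then show ?case by blast
qed

lemma foil_UNIV_bdd_below:
  assumes nf: "no_fixed_points x" and unb: "\<not> bdd_below (past_maxima x)"
  shows "bdd_below (foil x UNIV u)"
proof -
  obtain j0 where j0: "j0 \<in> past_maxima x" using unb by (auto simp: bdd_below_def)
  obtain p q where pq: "(record_map x ^^ p) j0 = (record_map x ^^ q) u"
    using record_orbits_meet[OF nf] by blast
  obtain B where B: "\<forall>v\<le>B. \<exists>a\<ge>Suc q. (record_map x ^^ a) v = j0"
    using past_maximum_reached_late[OF j0 unb] by blast
  have "B < v" if v: "v \<in> foil x UNIV u" for v
  proof (rule ccontr)
    assume "\<not> B < v"
    then obtain a where a: "a \<ge> Suc q" "(record_map x ^^ a) v = j0" using B not_less by blast
    then have "(record_map x ^^ (p + a)) v = (record_map x ^^ q) u" using pq by (simp add: funpow_add)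
    then show False using foil_UNIV_same_level[OF nf v] a(1) by fastforce
  qed
  then show ?thesis by (meson bdd_belowI less_imp_le)
qed

lemma rg_class_IF:
  assumes "no_fixed_points x" "\<not> bdd_below (past_maxima x)"
    and "\<forall>u. bdd_below (foil x UNIV u) \<longrightarrow> finite (foil x UNIV u)"
  shows "rg_connected x \<and> (\<forall>C \<in> rg_components x. class_IF x C)"
  using assms no_fixed_points_rg_connected[OF assms(1)] foil_UNIV_bdd_below[OF assms(1,2)]
  unfolding rg_components_def class_IF_def by (auto simp: rg_component_UNIV)

text \<open>When nonempty, \<open>lowest_foil x\<close> is the foil of minimal level, i.e. the foil whose
  orbits are joined by all other orbits.\<close>

definition lowest_foil :: "(int \<Rightarrow> int) \<Rightarrow> int set" where
  "lowest_foil x = {w. \<forall>v. \<exists>a b. a \<le> b \<and> (record_map x ^^ a) v = (record_map x ^^ b) w}"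

lemma finite_orbit_preimages:
  assumes "l \<notin> past_maxima x"
  shows "finite {w. \<exists>k. (record_map x ^^ k) w = l}"
proof -
  obtain m where m: "m < l" "psum x l < psum x m" using assms unfolding past_maxima_def by force
  have "{w. \<exists>k. (record_map x ^^ k) w = l} \<subseteq> {m<..l}"
  proof
    fix w assume "w \<in> {w. \<exists>k. (record_map x ^^ k) w = l}"
    then obtain k where k: "(record_map x ^^ k) w = l" by blast
    have "w \<le> l" using funpow_record_map_ge[of w k x] k by simp
    moreover have "m < w" using psum_le_on_orbit[OF k, of m] m by force
    ultimately show "w \<in> {m<..l}" by simp
  qed
  then show ?thesis by (rule finite_subset) simp
qed

lemma finite_hitting_times:
  assumes "no_fixed_points x" "finite L"
  shows "finite {k. (record_map x ^^ k) w \<in> L}"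
proof (rule finite_subset)
  show "{k. (record_map x ^^ k) w \<in> L} \<subseteq> {..nat (Max L - w)}"
  proof
    fix k assume "k \<in> {k. (record_map x ^^ k) w \<in> L}"
    then have "(record_map x ^^ k) w \<le> Max L" using assms(2) by simp
    then show "k \<in> {..nat (Max L - w)}"
      using no_fixed_points_funpow_record_map_ge[OF assms(1), of w k] by simp
  qed
qed simp

lemma in_lowest_foil_if_latest_arrival:
  assumes nf: "no_fixed_points x"
    and arrival: "(record_map x ^^ k0) w0 \<in> foil x UNIV u"
    and latest: "\<And>k w. (record_map x ^^ k) w \<in> foil x UNIV u \<Longrightarrow> k \<le> k0"
  shows "w0 \<in> lowest_foil x"
  unfolding lowest_foil_def
proof (intro CollectI allI)
  let ?R = "record_map x"
  fix v
  obtain a b where ab: "(?R ^^ a) v = (?R ^^ b) w0" using record_orbits_meet[OF nf] by blast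
  have "(?R ^^ (k0 + a - b)) v \<in> foil x UNIV u" if "b < a"
  proof -
    have "(?R ^^ (b + 1)) ((?R ^^ (k0 + a - b)) v) = (?R ^^ (k0 + 1 + a)) v"
      using that by (simp add: funpow_apply_funpow)
    also have "\<dots> = (?R ^^ (k0 + 1)) ((?R ^^ b) w0)"
      unfolding ab[symmetric] by (rule funpow_apply_funpow[symmetric])
    also have "\<dots> = (?R ^^ (b + 1)) ((?R ^^ k0) w0)" by (simp add: funpow_apply_funpow add_ac)
    finally have "(?R ^^ (k0 + a - b)) v \<in> foil x UNIV ((?R ^^ k0) w0)"
      unfolding in_foil_UNIV_iff by (metis le_add2)
    then show ?thesis using arrival foil_UNIV_eq by blast
  qed
  then have "a \<le> b" using latest by fastforce
  then show "\<exists>a b. a \<le> b \<and> (?R ^^ a) v = (?R ^^ b) w0" using ab by blast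
qed

lemma lowest_foil_arrives:
  assumes "w \<in> lowest_foil x"
  shows "\<exists>k. (record_map x ^^ k) w \<in> foil x UNIV u"
proof -
  let ?R = "record_map x"
  obtain a b where ab: "a \<le> b" "(?R ^^ a) u = (?R ^^ b) w"
    using assms unfolding lowest_foil_def by blast
  have "(?R ^^ (a + 1)) ((?R ^^ (b - a)) w) = (?R ^^ 1) ((?R ^^ b) w)"
    using ab(1) by (simp add: funpow_apply_funpow)
  also have "\<dots> = (?R ^^ (a + 1)) u" unfolding ab(2)[symmetric] by (simp add: funpow_apply_funpow)
  finally have "(?R ^^ (b - a)) w \<in> foil x UNIV u" unfolding in_foil_UNIV_iff by (metis le_add2)
  then show ?thesis by blast
qed

text \<open>Without past maxima every vertex has finitely many descendants, so a finite foil is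
  reached from only finitely many vertices, and in boundedly many steps.\<close>

lemma lowest_foil_finite_if_finite_foil:
  assumes nf: "no_fixed_points x" and no_max: "past_maxima x = {}"
    and fin: "finite (foil x UNIV u)"
  shows "lowest_foil x \<noteq> {} \<and> finite (lowest_foil x)"
proof -
  define L where "L = foil x UNIV u"
  define Low where "Low = {w. \<exists>k. (record_map x ^^ k) w \<in> L}"
  define K where "K = {k. \<exists>w. (record_map x ^^ k) w \<in> L}"
  have "Low = (\<Union>l\<in>L. {w. \<exists>k. (record_map x ^^ k) w = l})" unfolding Low_def by auto
  then have "finite Low" using finite_orbit_preimages no_max fin L_def by simp
  moreover have "K = (\<Union>w\<in>Low. {k. (record_map x ^^ k) w \<in> L})" unfolding K_def Low_def by auto
  ultimately have "finite K" using finite_hitting_times[OF nf] fin L_def by simp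
  moreover have "0 \<in> K" unfolding K_def L_def using foil_UNIV_refl by auto
  ultimately have "Max K \<in> K" by (intro Max_in) auto
  then obtain w0 where "(record_map x ^^ Max K) w0 \<in> L" unfolding K_def by blast
  then have "w0 \<in> lowest_foil x"
    using Max_ge[OF \<open>finite K\<close>] unfolding L_def K_def
    by (intro in_lowest_foil_if_latest_arrival[OF nf]) auto
  moreover have "lowest_foil x \<subseteq> Low" using lowest_foil_arrives unfolding Low_def L_def by blast
  ultimately show ?thesis using \<open>finite Low\<close> finite_subset by blast
qed

lemma rg_class_II:
  assumes "no_fixed_points x" "past_maxima x = {}"
    and "\<not> (lowest_foil x \<noteq> {} \<and> bdd_below (lowest_foil x))"
  shows "rg_connected x \<and> (\<forall>C \<in> rg_components x. class_II x C)"
proof -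
  have "infinite (foil x UNIV u)" for u
  proof
    assume "finite (foil x UNIV u)"
    then have "lowest_foil x \<noteq> {} \<and> finite (lowest_foil x)"
      by (rule lowest_foil_finite_if_finite_foil[OF assms(1,2)])
    then show False using assms(3) bdd_below_finite by metis
  qed
  then show ?thesis using no_fixed_points_rg_connected[OF assms(1)]
    unfolding rg_components_def class_II_def by (auto simp: rg_component_UNIV)
qed

definition shift_by :: "int \<Rightarrow> (int \<Rightarrow> int) \<Rightarrow> (int \<Rightarrow> int)" where
  "shift_by j x = (\<lambda>n. x (n + j))"

lemma shift_by_apply: "shift_by j x n = x (n + j)"
  by (simp add: shift_by_def)

lemma shift_eq_shift_by: "shift = shift_by 1"
  unfolding shift_def shift_by_def by (rule ext) simp

lemma shift_by_shift_by: "shift_by a (shift_by b x) = shift_by (a + b) x"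
  unfolding shift_by_def by (simp add: add.assoc)

lemma shift_by_0 [simp]: "shift_by 0 x = x"
  unfolding shift_by_def by simp

lemma funpow_shift_by: "(shift_by j ^^ k) x = shift_by (int k * j) x"
  by (induction k) (auto simp: shift_by_shift_by algebra_simps)

lemma ysum_shift_by: "ysum (shift_by j x) i n = ysum x (i + j) (n + j)"
proof -
  have "(\<lambda>l. l + j) ` {i..<n} = {i + j..<n + j}"
    by (auto simp: image_iff intro!: bexI[where x="_ - j"])
  then have "ysum x (i + j) (n + j) = sum x ((\<lambda>l. l + j) ` {i..<n})" unfolding ysum_def by simp
  also have "\<dots> = sum (\<lambda>l. x (l + j)) {i..<n}" by (subst sum.reindex) (auto simp: inj_on_def)
  finally show ?thesis unfolding ysum_def shift_by_def by simp
qed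

lemma psum_shift_by: "psum (shift_by j x) n = psum x (n + j) - psum x j"
proof -
  have "psum (shift_by j x) n = ysum (shift_by j x) 0 n" if "0 \<le> n"
    using ysum_eq_psum_diff[OF that] by (simp add: psum_def)
  moreover have "psum (shift_by j x) n = - ysum (shift_by j x) n 0" if "n < 0"
    using ysum_eq_psum_diff[of n 0] that by (simp add: psum_def)
  ultimately show ?thesis
    using ysum_eq_psum_diff[of j "n + j" x] ysum_eq_psum_diff[of "n + j" j x]
    by (cases "0 \<le> n") (simp_all add: ysum_shift_by)
qed

lemma record_map_shift_by: "record_map (shift_by j x) i = record_map x (i + j) - j"
proof (cases "\<exists>n>i + j. psum x (i + j) \<le> psum x n")
  case True
  let ?P = "\<lambda>n. i + j < n \<and> psum x (i + j) \<le> psum x n"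
  obtain n0 where "?P n0" using True by blast
  then have ex: "\<exists>n>i. psum (shift_by j x) i \<le> psum (shift_by j x) n"
    by (intro exI[of _ "n0 - j"]) (simp add: psum_shift_by)
  note least = int_Least_bounded_below[of ?P n0 "i + j"]
  have "(LEAST n. i < n \<and> psum (shift_by j x) i \<le> psum (shift_by j x) n) = (LEAST n. ?P n) - j"
  proof (rule Least_equality)
    show "i < (LEAST n. ?P n) - j \<and> psum (shift_by j x) i \<le> psum (shift_by j x) ((LEAST n. ?P n) - j)"
      using least(1) \<open>?P n0\<close> by (simp add: psum_shift_by)
    show "(LEAST n. ?P n) - j \<le> m" if "i < m \<and> psum (shift_by j x) i \<le> psum (shift_by j x) m" for m
      using least(2)[of "m + j"] \<open>?P n0\<close> that by (simp add: psum_shift_by)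
  qed
  then show ?thesis using True ex by (simp add: record_map_psum)
next
  case False
  then have "\<not> (\<exists>n>i. psum (shift_by j x) i \<le> psum (shift_by j x) n)"
    by (auto simp: psum_shift_by)
  then have "record_map (shift_by j x) i = i" "record_map x (i + j) = i + j"
    using False by (simp_all only: record_map_eq_self_iff not_False_eq_True)
  then show ?thesis by simp
qed

lemma funpow_record_map_shift_by:
  "(record_map (shift_by j x) ^^ k) i = (record_map x ^^ k) (i + j) - j"
  by (induction k) (auto simp: record_map_shift_by)

lemma past_maxima_shift_by: "w \<in> past_maxima (shift_by j x) \<longleftrightarrow> w + j \<in> past_maxima x"
  unfolding past_maxima_def psum_shift_by
  by (auto, metis add.commute diff_add_cancel add_less_cancel_left)

lemma foil_shift_by: "v \<in> foil (shift_by j x) UNIV i \<longleftrightarrow> v + j \<in> foil x UNIV (i + j)"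
  unfolding in_foil_UNIV_iff funpow_record_map_shift_by by simp

lemma lowest_foil_shift_by: "w \<in> lowest_foil (shift_by j x) \<longleftrightarrow> w + j \<in> lowest_foil x"
  unfolding lowest_foil_def funpow_record_map_shift_by
  by (auto, metis diff_add_cancel)

lemma space_seq_space [simp]: "space seq_space = UNIV"
  by (simp add: space_PiM PiE_UNIV_domain)

lemma measurable_shift_by [measurable]: "shift_by j \<in> measurable seq_space seq_space"
  unfolding shift_by_def by (rule measurable_PiM_single') auto

lemma measurable_sum_coordinates:
  "finite I \<Longrightarrow> (\<lambda>x. \<Sum>l\<in>I. x l) \<in> measurable seq_space (count_space (UNIV :: int set))"
proof (induction I rule: finite_induct)
  case (insert a I)
  have "(\<lambda>x. (\<lambda>k x. k + (\<Sum>l\<in>I. x l)) (x a) x) \<in> measurable seq_space (count_space UNIV)"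
  proof (rule measurable_compose_countable[where f="\<lambda>k x. k + (\<Sum>l\<in>I. x l)"])
    show "(\<lambda>x. k + (\<Sum>l\<in>I. x l)) \<in> measurable seq_space (count_space UNIV)" for k :: int
      using measurable_compose[OF insert.IH, of "\<lambda>y. k + y" "count_space UNIV"] by simp
  qed simp
  then show ?case using insert by simp
qed simp

lemma measurable_ysum [measurable]: "(\<lambda>x. ysum x i n) \<in> measurable seq_space (count_space UNIV)"
  unfolding ysum_def by (rule measurable_sum_coordinates) simp

lemma measurable_psum [measurable]: "(\<lambda>x. psum x n) \<in> measurable seq_space (count_space UNIV)"
  unfolding psum_def by (cases "0 \<le> n") simp_all

lemma measurable_record_map [measurable]:
  "(\<lambda>x. record_map x i) \<in> measurable seq_space (count_space UNIV)"
  unfolding measurable_count_space_eq2_countable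
proof (intro conjI ballI)
  fix a :: int
  have "Measurable.pred seq_space (\<lambda>x. record_map x i = a)"
    unfolding record_map_eq_iff by measurable
  then show "(\<lambda>x. record_map x i) -` {a} \<inter> space seq_space \<in> sets seq_space"
    by (simp add: pred_def vimage_def Int_def)
qed simp

lemma measurable_funpow_record_map [measurable]:
  "(\<lambda>x. (record_map x ^^ k) i) \<in> measurable seq_space (count_space UNIV)"
proof (induction k)
  case (Suc k)
  have "(\<lambda>x. (\<lambda>c x. record_map x c) ((record_map x ^^ k) i) x) \<in> measurable seq_space (count_space UNIV)"
    by (rule measurable_compose_countable[where f="\<lambda>c x. record_map x c"]) (use Suc in simp_all)
  then show ?case by simp
qed simp

lemma pred_in_foil_UNIV [measurable]: "Measurable.pred seq_space (\<lambda>x. v \<in> foil x UNIV u)"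
  unfolding in_foil_UNIV_iff by measurable

lemma pred_in_lowest_foil [measurable]: "Measurable.pred seq_space (\<lambda>x. w \<in> lowest_foil x)"
  unfolding lowest_foil_def by measurable

lemma pred_in_past_maxima [measurable]: "Measurable.pred seq_space (\<lambda>x. w \<in> past_maxima x)"
  unfolding past_maxima_def by measurable

section \<open>Birkhoff sums and the maximal ergodic inequality\<close>

locale measure_preserving_map = prob_space M for M :: "'a measure" +
  fixes T :: "'a \<Rightarrow> 'a"
  assumes measurable_T [measurable]: "T \<in> measurable M M"
    and emeasure_vimage: "\<And>A. A \<in> sets M \<Longrightarrow> emeasure M (T -` A \<inter> space M) = emeasure M A"
begin

lemma distr_T_eq: "distr M M T = M"
  by (rule measure_eqI) (auto simp: emeasure_distr emeasure_vimage)

lemma measurable_funpow [measurable]: "(T ^^ n) \<in> measurable M M"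
  by (induction n) (auto intro: measurable_comp)

lemma distr_funpow_eq: "distr M M (T ^^ n) = M"
proof (induction n)
  case (Suc n)
  have "distr M M (T ^^ Suc n) = distr (distr M M (T ^^ n)) M T" by (simp add: distr_distr)
  then show ?case using Suc distr_T_eq by (simp add: comp_def)
qed (simp add: distr_id[unfolded id_def])

lemma integrable_comp_funpow:
  fixes f :: "'a \<Rightarrow> real"
  shows "integrable M f \<Longrightarrow> integrable M (\<lambda>x. f ((T ^^ n) x))"
  using integrable_distr_eq[OF measurable_funpow[of n], of f] distr_funpow_eq by simp

lemma integral_comp_T:
  fixes f :: "'a \<Rightarrow> real"
  shows "f \<in> borel_measurable M \<Longrightarrow> (\<integral>x. f (T x) \<partial>M) = (\<integral>x. f x \<partial>M)"
  using integral_distr[OF measurable_T, of f] distr_T_eq by simp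

definition birkhoff_sum :: "('a \<Rightarrow> real) \<Rightarrow> nat \<Rightarrow> 'a \<Rightarrow> real" where
  "birkhoff_sum h n x = (\<Sum>k<n. h ((T ^^ k) x))"

lemma birkhoff_sum_0 [simp]: "birkhoff_sum h 0 x = 0"
  unfolding birkhoff_sum_def by simp

lemma birkhoff_sum_Suc: "birkhoff_sum h (Suc n) x = h x + birkhoff_sum h n (T x)"
  unfolding birkhoff_sum_def sum.lessThan_Suc_shift by (simp add: funpow_Suc_right del: funpow.simps)

lemma borel_measurable_birkhoff_sum [measurable]:
  "h \<in> borel_measurable M \<Longrightarrow> birkhoff_sum h n \<in> borel_measurable M"
  unfolding birkhoff_sum_def by (intro borel_measurable_sum measurable_compose[OF measurable_funpow])

text \<open>\<open>max_birkhoff_sum h n x\<close> is the maximum of \<open>0\<close> and the first \<open>n\<close> Birkhoff sums.\<close>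

primrec max_birkhoff_sum :: "('a \<Rightarrow> real) \<Rightarrow> nat \<Rightarrow> 'a \<Rightarrow> real" where
  "max_birkhoff_sum h 0 x = 0"
| "max_birkhoff_sum h (Suc n) x = max 0 (h x + max_birkhoff_sum h n (T x))"

lemma max_birkhoff_sum_nonneg: "0 \<le> max_birkhoff_sum h n x"
  by (cases n) auto

lemma max_birkhoff_sum_le_Suc: "max_birkhoff_sum h n x \<le> max_birkhoff_sum h (Suc n) x"
proof (induction n arbitrary: x)
  case (Suc n)
  then show ?case by (simp only: max_birkhoff_sum.simps(2)) (intro max.mono add_left_mono order_refl)
qed simp

lemma birkhoff_sum_le_max_birkhoff_sum: "j \<le> n \<Longrightarrow> birkhoff_sum h j x \<le> max_birkhoff_sum h n x"
proof (induction n arbitrary: j x)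
  case (Suc n)
  show ?case
  proof (cases j)
    case 0
    then show ?thesis using max_birkhoff_sum_nonneg[of h "Suc n" x] by simp
  next
    case (Suc j')
    then have "birkhoff_sum h j' (T x) \<le> max_birkhoff_sum h n (T x)" using Suc.IH Suc.prems by simp
    then show ?thesis using Suc by (simp add: birkhoff_sum_Suc)
  qed
qed simp

lemma max_birkhoff_sum_le_sum_abs: "max_birkhoff_sum h n x \<le> (\<Sum>k<n. \<bar>h ((T ^^ k) x)\<bar>)"
proof (induction n arbitrary: x)
  case (Suc n)
  have "h x + max_birkhoff_sum h n (T x) \<le> \<bar>h x\<bar> + (\<Sum>k<n. \<bar>h ((T ^^ k) (T x))\<bar>)"
    using Suc[of "T x"] by linarith
  then show ?case
    unfolding sum.lessThan_Suc_shift
    by (simp add: funpow_Suc_right sum_nonneg del: funpow.simps)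
qed simp

lemma borel_measurable_max_birkhoff_sum [measurable]:
  "h \<in> borel_measurable M \<Longrightarrow> max_birkhoff_sum h n \<in> borel_measurable M"
proof (induction n)
  case 0
  have "max_birkhoff_sum h 0 = (\<lambda>_. 0)" by auto
  then show ?case by simp
next
  case (Suc n)
  then have [measurable]: "max_birkhoff_sum h n \<in> borel_measurable M" by simp
  have "(\<lambda>x. max_birkhoff_sum h n (T x)) \<in> borel_measurable M" by measurable
  then show ?case using Suc.prems by simp
qed

lemma integrable_max_birkhoff_sum:
  assumes "integrable M h"
  shows "integrable M (max_birkhoff_sum h n)"
proof (rule Bochner_Integration.integrable_bound)
  show "integrable M (\<lambda>x. \<Sum>k<n. \<bar>h ((T ^^ k) x)\<bar>)"
    using integrable_comp_funpow[OF assms] by auto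
  show "AE x in M. norm (max_birkhoff_sum h n x) \<le> norm (\<Sum>k<n. \<bar>h ((T ^^ k) x)\<bar>)"
    using max_birkhoff_sum_le_sum_abs max_birkhoff_sum_nonneg by (auto simp: abs_of_nonneg)
qed (use assms in measurable)

definition divergence_set :: "('a \<Rightarrow> real) \<Rightarrow> 'a set" where
  "divergence_set h = {x \<in> space M. \<forall>B::nat. \<exists>n. real B < birkhoff_sum h n x}"

lemma sets_divergence_set [measurable]:
  "h \<in> borel_measurable M \<Longrightarrow> divergence_set h \<in> sets M"
  unfolding divergence_set_def by measurable

lemma birkhoff_sum_unbounded_comp_T_iff:
  "(\<forall>B. \<exists>n. B < birkhoff_sum h n (T x)) \<longleftrightarrow> (\<forall>B. \<exists>n. B < birkhoff_sum h n x)"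
proof
  assume H: "\<forall>B. \<exists>n. B < birkhoff_sum h n (T x)"
  show "\<forall>B. \<exists>n. B < birkhoff_sum h n x"
  proof
    fix B
    obtain n where "B + \<bar>h x\<bar> < birkhoff_sum h n (T x)" using H by blast
    then have "B < birkhoff_sum h (Suc n) x" by (simp add: birkhoff_sum_Suc)
    then show "\<exists>n. B < birkhoff_sum h n x" by blast
  qed
next
  assume H: "\<forall>B. \<exists>n. B < birkhoff_sum h n x"
  show "\<forall>B. \<exists>n. B < birkhoff_sum h n (T x)"
  proof
    fix B
    obtain n where n: "max B 0 + \<bar>h x\<bar> < birkhoff_sum h n x" using H by blast
    moreover have "0 \<le> max B 0 + \<bar>h x\<bar>" by simp
    ultimately have "n \<noteq> 0" by (metis birkhoff_sum_0 not_le order.strict_implies_order)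
    then obtain m where "n = Suc m" using not0_implies_Suc by blast
    then have "B < birkhoff_sum h m (T x)" using n by (simp add: birkhoff_sum_Suc)
    then show "\<exists>n. B < birkhoff_sum h n (T x)" by blast
  qed
qed

lemma divergence_set_invariant: "T -` divergence_set h \<inter> space M = divergence_set h"
proof -
  have "(\<forall>B::nat. \<exists>n. real B < f n) \<longleftrightarrow> (\<forall>B. \<exists>n. B < f n)" for f :: "nat \<Rightarrow> real"
    by (metis order.strict_trans1 real_arch_simple)
  then show ?thesis
    unfolding divergence_set_def using measurable_space[OF measurable_T]
    by (auto simp: birkhoff_sum_unbounded_comp_T_iff)
qed

lemma max_birkhoff_sum_increment:
  "max_birkhoff_sum h (Suc n) x - max_birkhoff_sum h n (T x) = max (- max_birkhoff_sum h n (T x)) (h x)"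
  by (simp add: max_def)

lemma integral_indicator_comp_T:
  fixes f :: "'a \<Rightarrow> real"
  assumes [measurable]: "A \<in> sets M" "f \<in> borel_measurable M"
    and invariant: "T -` A \<inter> space M = A"
  shows "(\<integral>x. indicator A x * f (T x) \<partial>M) = (\<integral>x. indicator A x * f x \<partial>M)"
proof -
  have "(\<integral>x. indicator A x * f (T x) \<partial>M) = (\<integral>x. indicator A (T x) * f (T x) \<partial>M)"
    using invariant measurable_space[OF measurable_T]
    by (intro Bochner_Integration.integral_cong) (auto simp: indicator_def)
  also have "\<dots> = (\<integral>x. indicator A x * f x \<partial>M)"
    by (rule integral_comp_T[of "\<lambda>x. indicator A x * f x"]) measurable
  finally show ?thesis .
qed

lemma integral_max_birkhoff_sum_increment_nonneg:
  assumes hint: "integrable M h" and [measurable]: "A \<in> sets M"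
    and invariant: "T -` A \<inter> space M = A"
  shows "0 \<le> (\<integral>x. indicator A x * (max_birkhoff_sum h (Suc n) x - max_birkhoff_sum h n (T x)) \<partial>M)"
proof -
  have [measurable]: "h \<in> borel_measurable M" using hint by simp
  have int_M: "integrable M (\<lambda>x. indicator A x * max_birkhoff_sum h m x)" for m
    using integrable_real_mult_indicator[OF _ integrable_max_birkhoff_sum[OF hint]]
    by (simp add: mult.commute)
  have int_T: "integrable M (\<lambda>x. max_birkhoff_sum h n ((T ^^ 1) x))"
    by (rule integrable_comp_funpow[OF integrable_max_birkhoff_sum[OF hint]])
  have int_MT: "integrable M (\<lambda>x. indicator A x * max_birkhoff_sum h n (T x))"
    using integrable_real_mult_indicator[OF \<open>A \<in> sets M\<close> int_T] by (simp add: mult.commute)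
  have "(\<integral>x. indicator A x * (max_birkhoff_sum h (Suc n) x - max_birkhoff_sum h n (T x)) \<partial>M) =
      (\<integral>x. indicator A x * max_birkhoff_sum h (Suc n) x \<partial>M) -
      (\<integral>x. indicator A x * max_birkhoff_sum h n (T x) \<partial>M)"
    unfolding right_diff_distrib by (rule Bochner_Integration.integral_diff[OF int_M int_MT])
  also have "\<dots> = (\<integral>x. indicator A x * max_birkhoff_sum h (Suc n) x \<partial>M) -
      (\<integral>x. indicator A x * max_birkhoff_sum h n x \<partial>M)"
    using integral_indicator_comp_T[OF _ _ invariant] by simp
  also have "\<dots> \<ge> 0"
    using integral_mono[OF int_M int_M, of n "Suc n"] max_birkhoff_sum_le_Suc[of h n]
    by (auto simp: indicator_def simp del: max_birkhoff_sum.simps)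
  finally show ?thesis .
qed

text \<open>Maximal ergodic inequality (Garsia's proof). Writing \<open>M\<^sub>n\<close> for \<open>max_birkhoff_sum h n\<close>,
  \<open>M\<^sub>n\<^sub>+\<^sub>1 - M\<^sub>n \<circ> T = max (- M\<^sub>n \<circ> T) h\<close> has nonnegative integral over the invariant set
  \<open>divergence_set h\<close>; on that set it is eventually equal to \<open>h\<close>, and it is dominated by
  \<open>\<bar>h\<bar>\<close>.\<close>

lemma integral_divergence_set_nonneg:
  assumes hint: "integrable M h"
  shows "0 \<le> (\<integral>x. indicator (divergence_set h) x * h x \<partial>M)"
proof -
  define A where "A = divergence_set h"
  define D where "D n x = max_birkhoff_sum h (Suc n) x - max_birkhoff_sum h n (T x)" for n x
  have [measurable]: "h \<in> borel_measurable M" using hint by simp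
  have [measurable]: "A \<in> sets M" unfolding A_def by measurable
  have invariant: "T -` A \<inter> space M = A" unfolding A_def by (rule divergence_set_invariant)
  have D_eventually: "eventually (\<lambda>n. D n x = h x) sequentially" if "x \<in> A" for x
  proof -
    have "T x \<in> A" using that invariant by (metis IntE vimageE)
    then obtain m where m: "real (nat \<lceil>- h x\<rceil>) < birkhoff_sum h m (T x)"
      unfolding A_def divergence_set_def by blast
    have "- max_birkhoff_sum h n (T x) \<le> h x" if "m \<le> n" for n
      using m birkhoff_sum_le_max_birkhoff_sum[OF that, of h "T x"] real_nat_ceiling_ge[of "- h x"]
      by linarith
    then show ?thesis
      unfolding eventually_sequentially D_def max_birkhoff_sum_increment by (auto intro!: exI[of _ m])
  qed
  have "(\<lambda>n. \<integral>x. indicator A x * D n x \<partial>M) \<longlonglongrightarrow> (\<integral>x. indicator A x * h x \<partial>M)"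
  proof (rule integral_dominated_convergence[where w="\<lambda>x. \<bar>h x\<bar>"])
    show "AE x in M. norm (indicator A x * D n x) \<le> \<bar>h x\<bar>" for n
    proof (rule AE_I2)
      fix x
      have "\<bar>max (- max_birkhoff_sum h n (T x)) (h x)\<bar> \<le> \<bar>h x\<bar>"
        using max_birkhoff_sum_nonneg[of h n "T x"] by (simp add: max_def abs_if)
      then show "norm (indicator A x * D n x) \<le> \<bar>h x\<bar>"
        by (auto simp: indicator_def D_def max_birkhoff_sum_increment)
    qed
    show "AE x in M. (\<lambda>n. indicator A x * D n x) \<longlonglongrightarrow> indicator A x * h x"
      using D_eventually by (intro AE_I2) (auto simp: indicator_def intro: tendsto_eventually)
  qed (use hint in \<open>auto simp: D_def\<close>)
  moreover have "0 \<le> (\<integral>x. indicator A x * D n x \<partial>M)" for n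
    unfolding D_def using integral_max_birkhoff_sum_increment_nonneg[OF hint _ invariant] by simp
  ultimately show ?thesis unfolding A_def by (intro LIMSEQ_le_const) auto
qed

end

locale ergodic_map = measure_preserving_map +
  assumes ergodic: "\<And>A. A \<in> sets M \<Longrightarrow> T -` A \<inter> space M = A \<Longrightarrow> emeasure M A = 0 \<or> emeasure M A = 1"
begin

lemma birkhoff_sum_bounded_above:
  assumes hint: "integrable M h" and neg: "(\<integral>x. h x \<partial>M) < 0"
  shows "AE x in M. \<exists>B::nat. \<forall>n. birkhoff_sum h n x \<le> real B"
proof -
  have [measurable]: "h \<in> borel_measurable M" using hint by simp
  have "emeasure M (divergence_set h) \<noteq> 1"
  proof
    assume "emeasure M (divergence_set h) = 1"
    then have "AE x in M. x \<in> divergence_set h" by (intro AE_I_eq_1) (auto simp: divergence_set_def)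
    then have "(\<integral>x. indicator (divergence_set h) x * h x \<partial>M) = (\<integral>x. h x \<partial>M)"
      by (intro integral_cong_AE) (auto elim!: eventually_mono)
    then show False using integral_divergence_set_nonneg[OF hint] neg by simp
  qed
  then have "emeasure M (divergence_set h) = 0"
    using ergodic[OF _ divergence_set_invariant] by (metis sets_divergence_set \<open>h \<in> borel_measurable M\<close>)
  then have "AE x in M. x \<notin> divergence_set h" by (intro AE_not_in) (simp add: null_sets_def)
  then show ?thesis using AE_space by eventually_elim (auto simp: divergence_set_def not_less)
qed

lemma birkhoff_sum_tends_to_bot_integrable:
  assumes hint: "integrable M h" and neg: "(\<integral>x. h x \<partial>M) < 0"
  shows "AE x in M. \<forall>V. \<exists>N. \<forall>n\<ge>N. birkhoff_sum h n x < V"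
proof -
  define c where "c = (\<integral>x. h x \<partial>M) / 2"
  have "c < 0" using neg by (simp add: c_def)
  have "integrable M (\<lambda>x. h x - c)" using hint by simp
  moreover have "(\<integral>x. h x - c \<partial>M) < 0"
    using hint neg prob_space by (simp add: c_def Bochner_Integration.integral_diff)
  ultimately have "AE x in M. \<exists>B::nat. \<forall>n. birkhoff_sum (\<lambda>x. h x - c) n x \<le> real B"
    by (rule birkhoff_sum_bounded_above)
  moreover have sum_eq: "birkhoff_sum h n x = birkhoff_sum (\<lambda>x. h x - c) n x + real n * c" for n x
    unfolding birkhoff_sum_def by (simp add: sum_subtractf)
  ultimately show ?thesis
  proof (elim eventually_mono, intro allI)
    fix x V assume "\<exists>B::nat. \<forall>n. birkhoff_sum (\<lambda>x. h x - c) n x \<le> real B"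
    then obtain B :: nat where B: "\<And>n. birkhoff_sum (\<lambda>x. h x - c) n x \<le> real B" by blast
    obtain N :: nat where N: "(real B - V) / (- c) < real N" using reals_Archimedean2 by blast
    have "birkhoff_sum h n x < V" if "N \<le> n" for n
    proof -
      have "(real B - V) / (- c) < real n" using N that by (meson of_nat_le_iff less_le_trans)
      then have "real B - V < real n * (- c)"
        using pos_divide_less_eq[of "- c" "real B - V" "real n"] \<open>c < 0\<close> by linarith
      then show ?thesis using B[of n] sum_eq[of n x] by simp
    qed
    then show "\<exists>N. \<forall>n\<ge>N. birkhoff_sum h n x < V" by blast
  qed
qed

text \<open>If \<open>E h\<^sup>+ < E h\<^sup>-\<close>, truncating \<open>h\<close> from below at a suitable level gives an integrable
  majorant that still has negative mean (monotone convergence).\<close>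

lemma integrable_majorant_negative_mean:
  assumes [measurable]: "h \<in> borel_measurable M"
    and lt: "(\<integral>\<^sup>+x. ennreal (h x) \<partial>M) < (\<integral>\<^sup>+x. ennreal (- h x) \<partial>M)"
  obtains g where "integrable M g" "\<And>x. h x \<le> g x" "(\<integral>x. g x \<partial>M) < 0"
proof -
  define P where "P = (\<integral>\<^sup>+x. ennreal (h x) \<partial>M)"
  define q where "q K = (\<integral>\<^sup>+x. ennreal (min (- h x) (real K)) \<partial>M)" for K :: nat
  have "P < \<infinity>" using less_le_trans[OF lt top_greatest] unfolding P_def infinity_ennreal_def .
  have "(SUP K. ennreal (min (- h x) (real K))) = ennreal (- h x)" for x
  proof (rule antisym)
    show "(SUP K. ennreal (min (- h x) (real K))) \<le> ennreal (- h x)"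
      by (rule SUP_least) (auto intro: ennreal_leI)
    have "ennreal (- h x) = ennreal (min (- h x) (real (nat \<lceil>- h x\<rceil>)))"
      using real_nat_ceiling_ge[of "- h x"] by simp
    also have "\<dots> \<le> (SUP K. ennreal (min (- h x) (real K)))" by (rule SUP_upper) simp
    finally show "ennreal (- h x) \<le> (SUP K. ennreal (min (- h x) (real K)))" .
  qed
  moreover have "(\<integral>\<^sup>+x. (SUP K. ennreal (min (- h x) (real K))) \<partial>M) = (SUP K. q K)"
    unfolding q_def
    by (rule nn_integral_monotone_convergence_SUP) (auto simp: incseq_def le_fun_def intro!: ennreal_leI)
  ultimately have "P < (SUP K. q K)" using lt unfolding P_def by simp
  then obtain K where K: "P < q K" by (auto simp: less_SUP_iff)
  define g where "g x = max (h x) (- real K)" for x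
  have [measurable]: "g \<in> borel_measurable M" unfolding g_def by measurable
  have g_pos: "(\<integral>\<^sup>+x. ennreal (g x) \<partial>M) = P"
    unfolding P_def by (rule nn_integral_cong) (auto simp: g_def max_def ennreal_neg)
  have g_neg: "(\<integral>\<^sup>+x. ennreal (- g x) \<partial>M) = q K"
    unfolding q_def by (rule nn_integral_cong) (auto simp: g_def max_def min_def)
  have "q K \<le> (\<integral>\<^sup>+x. ennreal (real K) \<partial>M)"
    unfolding q_def by (rule nn_integral_mono) (auto intro: ennreal_leI)
  then have "q K < \<infinity>" by (simp add: emeasure_space_1 le_less_trans)
  then have "integrable M g" unfolding real_integrable_def using g_pos g_neg \<open>P < \<infinity>\<close> by auto
  moreover have "(\<integral>x. g x \<partial>M) < 0"
    using real_lebesgue_integral_def[OF \<open>integrable M g\<close>] g_pos g_neg K \<open>P < \<infinity>\<close> \<open>q K < \<infinity>\<close>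
    by (simp add: enn2real_less_iff less_top)
  moreover have "h x \<le> g x" for x unfolding g_def by simp
  ultimately show ?thesis using that by blast
qed

lemma birkhoff_sum_tends_to_bot:
  assumes [measurable]: "h \<in> borel_measurable M"
    and "(\<integral>\<^sup>+x. ennreal (h x) \<partial>M) < (\<integral>\<^sup>+x. ennreal (- h x) \<partial>M)"
  shows "AE x in M. \<forall>V. \<exists>N. \<forall>n\<ge>N. birkhoff_sum h n x < V"
proof -
  obtain g where g: "integrable M g" "(\<integral>x. g x \<partial>M) < 0" and le: "\<And>x. h x \<le> g x"
    using integrable_majorant_negative_mean assms by blast
  have "AE x in M. \<forall>V. \<exists>N. \<forall>n\<ge>N. birkhoff_sum g n x < V"
    using g by (rule birkhoff_sum_tends_to_bot_integrable)
  moreover have "birkhoff_sum h n x \<le> birkhoff_sum g n x" for n x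
    unfolding birkhoff_sum_def by (intro sum_mono le)
  ultimately show ?thesis by (elim eventually_mono) (meson le_less_trans)
qed

end

section \<open>Stationary ergodic laws of integer sequences\<close>

lemma mean_pos_eq: "mean_pos M f = (\<integral>\<^sup>+x. ennreal (real_of_int (f x)) \<partial>M)"
  unfolding mean_pos_def by (intro nn_integral_cong) (simp add: ennreal_neg max_def)

lemma mean_neg_eq: "mean_neg M f = (\<integral>\<^sup>+x. ennreal (- real_of_int (f x)) \<partial>M)"
  unfolding mean_neg_def by (intro nn_integral_cong) (simp add: ennreal_neg max_def)

locale ergodic_sequence_law = prob_space \<mu> for \<mu> :: "(int \<Rightarrow> int) measure" +
  assumes sets_eq: "sets \<mu> = sets seq_space"
    and shift_invariant: "distr \<mu> seq_space shift = \<mu>"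
    and shift_ergodic: "\<forall>A \<in> sets seq_space. shift -` A \<inter> space seq_space = A \<longrightarrow>
      emeasure \<mu> A = 0 \<or> emeasure \<mu> A = 1"
begin

lemma space_eq [simp]: "space \<mu> = UNIV"
  using sets_eq_imp_space_eq[OF sets_eq] by simp

lemma measurable_from_eq [simp]: "measurable \<mu> N = measurable seq_space N"
  by (rule measurable_cong_sets[OF sets_eq refl])

lemma measurable_to_eq [simp]: "measurable N \<mu> = measurable N seq_space"
  by (rule measurable_cong_sets[OF refl sets_eq])

lemma emeasure_shift_by_vimage:
  assumes A: "A \<in> sets seq_space"
  shows "emeasure \<mu> (shift_by j -` A) = emeasure \<mu> A"
proof -
  have one: "emeasure \<mu> (shift_by 1 -` B) = emeasure \<mu> B" if "B \<in> sets seq_space" for B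
    using emeasure_distr[of shift \<mu> seq_space B] that shift_invariant
    by (simp add: shift_eq_shift_by)
  have vimage_add: "shift_by (a + b) -` B = shift_by a -` (shift_by b -` B)" for a b B
    by (auto simp: shift_by_shift_by add.commute)
  have sets_vimage: "shift_by a -` B \<in> sets seq_space" if "B \<in> sets seq_space" for a B
    using measurable_sets[OF measurable_shift_by that] by simp
  have minus_one: "emeasure \<mu> (shift_by (-1) -` B) = emeasure \<mu> B" if "B \<in> sets seq_space" for B
    using one[OF sets_vimage[OF that, of "-1"]] vimage_add[of 1 "-1" B] by (simp add: vimage_def)
  have "emeasure \<mu> (shift_by (int n) -` A) = emeasure \<mu> A" for n
    by (induction n) (simp_all add: vimage_add[of 1] one sets_vimage A add.commute)
  moreover have "emeasure \<mu> (shift_by (- int n) -` A) = emeasure \<mu> A" for n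
  proof (induction n)
    case (Suc n)
    have "shift_by (- int (Suc n)) -` A = shift_by (-1) -` (shift_by (- int n) -` A)"
      using vimage_add[of "-1" "- int n" A] by simp
    then show ?case using minus_one[OF sets_vimage[OF A]] Suc by simp
  qed simp
  ultimately show ?thesis by (cases j rule: int_cases2) simp_all
qed

lemma ergodic_shift_by:
  assumes "j = 1 \<or> j = -1"
  shows "ergodic_map \<mu> (shift_by j)"
proof unfold_locales
  show "shift_by j \<in> \<mu> \<rightarrow>\<^sub>M \<mu>" by simp
  show "emeasure \<mu> (shift_by j -` A \<inter> space \<mu>) = emeasure \<mu> A" if "A \<in> sets \<mu>" for A
    using emeasure_shift_by_vimage that by (simp add: sets_eq)
  fix A assume A: "A \<in> sets \<mu>" and inv: "shift_by j -` A \<inter> space \<mu> = A"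
  have "shift_by 1 -` A = A"
  proof (cases "j = 1")
    case False
    then have "shift_by 1 -` A = shift_by 1 -` (shift_by (-1) -` A)" using inv assms by simp
    also have "\<dots> = A" by (auto simp: shift_by_shift_by)
    finally show ?thesis .
  qed (use inv in simp)
  then show "emeasure \<mu> A = 0 \<or> emeasure \<mu> A = 1"
    using shift_ergodic A by (simp add: sets_eq shift_eq_shift_by)
qed

sublocale forward: ergodic_map \<mu> "shift_by 1" by (rule ergodic_shift_by) simp

sublocale backward: ergodic_map \<mu> "shift_by (-1)" by (rule ergodic_shift_by) simp

lemma nn_integral_coordinate:
  "(\<integral>\<^sup>+x. f (x j) \<partial>\<mu>) = (\<integral>\<^sup>+x. f (x 0) \<partial>\<mu>)"
proof -
  have [measurable]: "(\<lambda>x. f (x 0)) \<in> borel_measurable seq_space"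
    using measurable_compose[OF measurable_component_singleton[of 0 UNIV] measurable_count_space[of f]]
    by (simp add: o_def)
  have "distr \<mu> \<mu> (shift_by j) = \<mu>"
  proof (rule measure_eqI)
    fix A assume "A \<in> sets (distr \<mu> \<mu> (shift_by j))"
    then have A: "A \<in> sets seq_space" by (simp add: sets_eq)
    then show "emeasure (distr \<mu> \<mu> (shift_by j)) A = emeasure \<mu> A"
      using emeasure_distr[of "shift_by j" \<mu> \<mu> A] emeasure_shift_by_vimage[OF A] by (simp add: sets_eq)
  qed simp
  then have "(\<integral>\<^sup>+x. f (x 0) \<partial>\<mu>) = (\<integral>\<^sup>+x. f (x 0) \<partial>distr \<mu> \<mu> (shift_by j))" by simp
  also have "\<dots> = (\<integral>\<^sup>+x. f (shift_by j x 0) \<partial>\<mu>)" by (rule nn_integral_distr) simp_all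
  finally have "(\<integral>\<^sup>+x. f (x 0) \<partial>\<mu>) = (\<integral>\<^sup>+x. f (shift_by j x 0) \<partial>\<mu>)" .
  then show ?thesis by (simp add: shift_by_def)
qed

lemma psum_drift:
  fixes c :: int
  assumes "mean_pos \<mu> (\<lambda>x. c * x 0) < mean_neg \<mu> (\<lambda>x. c * x 0)"
  shows "AE x in \<mu>. (\<forall>V. \<exists>N. \<forall>n\<ge>N. c * psum x n < V) \<and> (\<forall>V. \<exists>N. \<forall>n\<le>N. V < c * psum x n)"
proof -
  have [measurable]: "(\<lambda>x. real_of_int (c * x j)) \<in> borel_measurable seq_space" for j
    by measurable
  have "(\<integral>\<^sup>+x. ennreal (real_of_int (c * x j)) \<partial>\<mu>) < (\<integral>\<^sup>+x. ennreal (- real_of_int (c * x j)) \<partial>\<mu>)" for j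
    using assms unfolding mean_pos_eq mean_neg_eq
    by (subst (1 2) nn_integral_coordinate[where f="\<lambda>k. ennreal (_ (c * k))"])
  then have fwd: "AE x in \<mu>. \<forall>V. \<exists>N. \<forall>n\<ge>N. forward.birkhoff_sum (\<lambda>x. real_of_int (c * x 0)) n x < V"
    and bwd: "AE x in \<mu>. \<forall>V. \<exists>N. \<forall>n\<ge>N. backward.birkhoff_sum (\<lambda>x. real_of_int (c * x (-1))) n x < V"
    by (auto intro!: forward.birkhoff_sum_tends_to_bot backward.birkhoff_sum_tends_to_bot)
  have sum_fwd: "forward.birkhoff_sum (\<lambda>x. real_of_int (c * x 0)) n x = real_of_int (c * psum x (int n))"
    and sum_bwd: "backward.birkhoff_sum (\<lambda>x. real_of_int (c * x (-1))) n x = real_of_int (- c * psum x (- int n))"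
    for n x
    by (simp_all add: forward.birkhoff_sum_def backward.birkhoff_sum_def funpow_shift_by shift_by_def
        psum_nat psum_neg_nat sum_distrib_left sum_negf algebra_simps)
  from fwd bwd show ?thesis
  proof eventually_elim
    case (elim x)
    have "\<forall>V. \<exists>N. \<forall>n\<ge>N. c * psum x n < V"
      using elim(1) sum_fwd by (intro tends_to_bot_int_of_nat) simp
    moreover have bwd_int: "\<forall>V. \<exists>N. \<forall>n\<ge>N. - c * psum x (- n) < V"
      using elim(2) sum_bwd by (intro tends_to_bot_int_of_nat) simp
    have "\<exists>N. \<forall>n\<le>N. V < c * psum x n" for V
    proof -
      obtain N where N: "\<forall>n\<ge>N. - c * psum x (- n) < - V" using bwd_int by blast
      have "V < c * psum x n" if "n \<le> - N" for n using N[rule_format, of "- n"] that by simp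
      then show ?thesis by blast
    qed
    ultimately show ?case by blast
  qed
qed

lemma birkhoff_sum_fixed_point_bonus_le_0:
  assumes "record_map x 0 = 0"
  shows "forward.birkhoff_sum (\<lambda>x. real_of_int (x 0) + indicator {x. record_map x 0 = 0} x) n x \<le> 0"
proof -
  have "forward.birkhoff_sum (\<lambda>x. real_of_int (x 0) + indicator {x. record_map x 0 = 0} x) n x =
      real_of_int (psum x (int n) + int (card {k. k < n \<and> record_map x (int k) = int k}))"
    by (simp add: forward.birkhoff_sum_def funpow_shift_by record_map_shift_by psum_nat
        sum.distrib indicator_def sum.If_cases shift_by_apply Int_def)
  then show ?thesis using psum_plus_card_fixed_points_le[OF assms, of n] by simp
qed

text \<open>If \<open>F = {R 0 = 0}\<close> had positive probability, the Birkhoff sums of \<open>x 0 + 1\<^sub>F\<close>, whose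
  mean is \<open>\<mu> F > 0\<close>, would tend to \<open>+\<infinity>\<close>; but on \<open>F\<close> they stay \<open>\<le> 0\<close>, since the walk drops
  by at least one after every fixed point.\<close>

lemma emeasure_fixed_point_0_if_mean_zero:
  assumes eq: "mean_pos \<mu> (\<lambda>x. x 0) = mean_neg \<mu> (\<lambda>x. x 0)" and fin: "mean_pos \<mu> (\<lambda>x. x 0) \<noteq> \<infinity>"
  shows "emeasure \<mu> {x. record_map x 0 = 0} = 0"
proof (rule ccontr)
  define F where "F = {x. record_map x 0 = 0}"
  define h where "h x = real_of_int (x 0) + indicator F x" for x
  assume "emeasure \<mu> {x. record_map x 0 = 0} \<noteq> 0"
  then have "0 < measure \<mu> F"
    using emeasure_eq_measure[of F] unfolding F_def by (simp add: zero_less_measure_iff)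
  have "Measurable.pred seq_space (\<lambda>x. record_map x 0 = 0)" by measurable
  then have F_sets [measurable]: "F \<in> sets \<mu>" unfolding F_def pred_def by (simp add: sets_eq)
  have [measurable]: "(\<lambda>x. real_of_int (x 0)) \<in> borel_measurable seq_space" by measurable
  have int_x0: "integrable \<mu> (\<lambda>x. real_of_int (x 0))"
    using eq fin unfolding real_integrable_def mean_pos_eq mean_neg_eq by simp
  have "(\<integral>x. real_of_int (x 0) \<partial>\<mu>) = 0"
    using real_lebesgue_integral_def[OF int_x0] eq unfolding mean_pos_eq mean_neg_eq by simp
  moreover have int_F: "integrable \<mu> (indicator F :: _ \<Rightarrow> real)"
    using F_sets by (intro integrable_real_indicator) (simp_all add: less_top[symmetric])
  ultimately have "integrable \<mu> (\<lambda>x. - h x)" "(\<integral>x. - h x \<partial>\<mu>) < 0"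
    unfolding h_def using int_x0 \<open>0 < measure \<mu> F\<close> by simp_all
  then have "AE x in \<mu>. \<forall>V. \<exists>N. \<forall>n\<ge>N. forward.birkhoff_sum (\<lambda>x. - h x) n x < V"
    by (rule forward.birkhoff_sum_tends_to_bot_integrable)
  then have "AE x in \<mu>. x \<notin> F"
  proof (rule eventually_mono)
    fix x assume "\<forall>V. \<exists>N. \<forall>n\<ge>N. forward.birkhoff_sum (\<lambda>x. - h x) n x < V"
    then obtain N where "forward.birkhoff_sum (\<lambda>x. - h x) N x < 0" by blast
    moreover have "forward.birkhoff_sum (\<lambda>x. - h x) N x = - forward.birkhoff_sum h N x"
      unfolding forward.birkhoff_sum_def by (simp add: sum_negf)
    moreover have "forward.birkhoff_sum h N x \<le> 0" if "x \<in> F"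
      using birkhoff_sum_fixed_point_bonus_le_0[of x N] that unfolding h_def F_def by simp
    ultimately show "x \<notin> F" by fastforce
  qed
  then show False using \<open>0 < measure \<mu> F\<close> AE_iff_measurable[of F] F_sets by (simp add: measure_def)
qed

lemma no_fixed_points_if_mean_zero:
  assumes "mean_pos \<mu> (\<lambda>x. x 0) = mean_neg \<mu> (\<lambda>x. x 0)" "mean_pos \<mu> (\<lambda>x. x 0) \<noteq> \<infinity>"
  shows "AE x in \<mu>. no_fixed_points x"
proof -
  define F where "F = {x. record_map x 0 = 0}"
  have "Measurable.pred seq_space (\<lambda>x. record_map x 0 = 0)" by measurable
  then have F_sets: "F \<in> sets seq_space" unfolding F_def pred_def by simp
  have "shift_by j -` F \<in> null_sets \<mu>" for j
    using emeasure_fixed_point_0_if_mean_zero[OF assms] emeasure_shift_by_vimage[OF F_sets]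
      measurable_sets[OF measurable_shift_by F_sets]
    unfolding F_def by (simp add: sets_eq null_sets_def)
  then have "AE x in \<mu>. \<forall>j. x \<notin> shift_by j -` F"
    unfolding AE_all_countable by (blast intro: AE_not_in)
  then show ?thesis
    by (rule eventually_mono) (simp add: F_def no_fixed_points_def record_map_shift_by)
qed

end

definition least_event :: "((int \<Rightarrow> int) \<Rightarrow> int set) \<Rightarrow> int \<Rightarrow> (int \<Rightarrow> int) set" where
  "least_event Z k = {x. k \<in> Z x \<and> (\<forall>w<k. w \<notin> Z x)}"

lemma sets_least_event:
  assumes [measurable]: "\<And>k. Measurable.pred seq_space (\<lambda>x. k \<in> Z x)"
  shows "least_event Z k \<in> sets seq_space"
proof -
  have "Measurable.pred seq_space (\<lambda>x. k \<in> Z x \<and> (\<forall>w<k. w \<notin> Z x))" by measurable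
  then show ?thesis unfolding least_event_def pred_def by simp
qed

lemma least_event_disjoint: "k \<noteq> k' \<Longrightarrow> least_event Z k \<inter> least_event Z k' = {}"
  unfolding least_event_def by (auto simp: neq_iff)

lemma in_least_event_if_bdd_below:
  assumes "Z x \<noteq> {}" "bdd_below (Z x)"
  shows "\<exists>k. x \<in> least_event Z k"
proof -
  obtain w b where w: "w \<in> Z x" and b: "\<And>v. v \<in> Z x \<Longrightarrow> b \<le> v"
    using assms unfolding bdd_below_def by blast
  define k where "k = (LEAST k. k \<in> Z x)"
  have bound: "b - 1 < v" if "v \<in> Z x" for v using b[OF that] by simp
  have "k \<in> Z x" "\<And>v. v \<in> Z x \<Longrightarrow> k \<le> v"
    unfolding k_def using int_Least_bounded_below[of "\<lambda>k. k \<in> Z x" w "b - 1"] w bound by blast+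
  then have "x \<in> least_event Z k" unfolding least_event_def by (auto simp: not_less[symmetric])
  then show ?thesis by blast
qed

lemma foil_finite_if_eventually_not_least:
  assumes bdd: "bdd_below (foil x UNIV u)"
    and ev: "\<forall>i. \<exists>N. \<forall>j\<ge>N. x \<notin> least_event (\<lambda>y. foil y UNIV (i + int j)) i"
  shows "finite (foil x UNIV u)"
proof -
  obtain i where i: "x \<in> least_event (\<lambda>y. foil y UNIV u) i"
    using in_least_event_if_bdd_below[of "\<lambda>y. foil y UNIV u" x] bdd foil_UNIV_refl by blast
  obtain N where N: "\<forall>j\<ge>N. x \<notin> least_event (\<lambda>y. foil y UNIV (i + int j)) i" using ev by blast
  have "foil x UNIV u \<subseteq> {i..<i + int N}"
  proof
    fix v assume v: "v \<in> foil x UNIV u"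
    have "i \<le> v" using i v unfolding least_event_def by (auto simp: not_less[symmetric])
    moreover have "\<not> i + int N \<le> v"
    proof
      assume "i + int N \<le> v"
      then have "x \<in> least_event (\<lambda>y. foil y UNIV (i + int (nat (v - i)))) i" "N \<le> nat (v - i)"
        using i foil_UNIV_eq[OF v] by (simp_all add: least_event_def)
      then show False using N by blast
    qed
    ultimately show "v \<in> {i..<i + int N}" by simp
  qed
  then show ?thesis by (rule finite_subset) simp
qed

context ergodic_sequence_law
begin

lemma sum_measure_least_event_le_1:
  fixes g :: "nat \<Rightarrow> int"
  assumes "\<And>k. Measurable.pred seq_space (\<lambda>x. k \<in> Z x)" "inj g"
  shows "(\<Sum>n<N. measure \<mu> (least_event Z (g n))) \<le> 1"
proof -
  have "(\<Sum>n<N. measure \<mu> (least_event Z (g n))) = measure \<mu> (\<Union>n<N. least_event Z (g n))"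
    using sets_least_event[OF assms(1)] least_event_disjoint assms(2)
    by (intro finite_measure_finite_Union[symmetric]) (auto simp: sets_eq disjoint_family_on_def inj_eq)
  also have "\<dots> \<le> 1" by (rule prob_le_1)
  finally show ?thesis .
qed

text \<open>Shift covariance forces all the events \<open>least_event Z k\<close> to have the same probability;
  being disjoint, they are null.\<close>

lemma covariant_set_not_bdd_below:
  assumes pred: "\<And>k. Measurable.pred seq_space (\<lambda>x. k \<in> Z x)"
    and covariant: "\<And>x j k. k \<in> Z (shift_by j x) \<longleftrightarrow> k + j \<in> Z x"
  shows "AE x in \<mu>. \<not> (Z x \<noteq> {} \<and> bdd_below (Z x))"
proof -
  note sets_least_event[OF pred, measurable]
  have vimage_eq: "shift_by k -` least_event Z 0 = least_event Z k" for k
    using all_less_add_iff[of 0 "\<lambda>w. w \<notin> Z _" k] unfolding least_event_def by (auto simp: covariant)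
  define m where "m = measure \<mu> (least_event Z 0)"
  then have same: "measure \<mu> (least_event Z k) = m" for k
    using emeasure_shift_by_vimage[of "least_event Z 0" k] vimage_eq[of k]
    by (simp add: measure_def)
  have bounded: "real N * m \<le> 1" for N
    using sum_measure_least_event_le_1[OF pred, of int N] by (simp add: same inj_on_def)
  have "m = 0"
  proof (rule ccontr)
    assume "m \<noteq> 0"
    then have "0 < m" using measure_nonneg order_le_neq_trans unfolding m_def by metis
    then obtain N where "1 < real N * m" using ex_less_of_nat_mult by blast
    then show False using bounded[of N] by simp
  qed
  then have "emeasure \<mu> (least_event Z k) = 0" for k
    using same[of k] emeasure_eq_measure[of "least_event Z k"] by simp
  then have "AE x in \<mu>. \<forall>k. x \<notin> least_event Z k"
    unfolding AE_all_countable by (intro allI AE_not_in) (simp add: null_sets_def sets_eq)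
  then show ?thesis by (rule eventually_mono) (use in_least_event_if_bdd_below in blast)
qed

text \<open>Mass transport: by stationarity, the expected number of \<open>j \<ge> 0\<close> whose foil has least
  element \<open>i\<close> is the probability that the foil of \<open>0\<close> has a least element \<open>\<le> 0\<close>, at most one;
  Borel-Cantelli then applies.\<close>

lemma AE_eventually_not_least_in_foil:
  "AE x in \<mu>. \<forall>i. \<exists>N. \<forall>j\<ge>N. x \<notin> least_event (\<lambda>y. foil y UNIV (i + int j)) i"
proof -
  define D where "D k = least_event (\<lambda>y. foil y UNIV 0) k" for k
  define C where "C i j = least_event (\<lambda>y. foil y UNIV (i + int j)) i" for i j
  have D_sets [measurable]: "D k \<in> sets seq_space" for k
    unfolding D_def by (rule sets_least_event) measurable
  have C_eq: "C i j = shift_by (i + int j) -` D (- int j)" for i j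
    using all_less_add_iff[of "- int j" "\<lambda>w. w \<notin> foil _ UNIV (i + int j)" "i + int j"]
    by (auto simp: C_def D_def least_event_def foil_shift_by)
  have C_sets: "C i j \<in> sets \<mu>" for i j
    using measurable_sets[OF measurable_shift_by D_sets] by (simp add: C_eq sets_eq)
  have C_measure: "measure \<mu> (C i j) = measure \<mu> (D (- int j))" for i j
    unfolding C_eq measure_def emeasure_shift_by_vimage[OF D_sets] ..
  have "summable (\<lambda>j. measure \<mu> (C i j))" for i
  proof (rule summableI_nonneg_bounded)
    show "(\<Sum>j<N. measure \<mu> (C i j)) \<le> 1" for N
      using sum_measure_least_event_le_1[of "\<lambda>y. foil y UNIV 0" "\<lambda>j. - int j" N]
      unfolding C_measure D_def by (simp add: inj_on_def)
  qed simp
  then have "AE x in \<mu>. eventually (\<lambda>j. x \<in> space \<mu> - C i j) sequentially" for i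
    using C_sets by (intro borel_cantelli_AE1) (simp_all add: emeasure_eq_measure)
  then show ?thesis by (simp add: AE_all_countable eventually_sequentially C_def)
qed

lemma foils_finite_if_bdd_below:
  "AE x in \<mu>. \<forall>u. bdd_below (foil x UNIV u) \<longrightarrow> finite (foil x UNIV u)"
  using AE_eventually_not_least_in_foil
  by (rule eventually_mono) (blast intro: foil_finite_if_eventually_not_least)

end

lemma mean_pos_uminus: "mean_pos M (\<lambda>x. - f x) = mean_neg M f"
  unfolding mean_pos_def mean_neg_def ..

lemma mean_neg_uminus: "mean_neg M (\<lambda>x. - f x) = mean_pos M f"
  unfolding mean_pos_def mean_neg_def by simp

lemma ext_mean_less_0D: "mean_exists M f \<Longrightarrow> ext_mean M f < 0 \<Longrightarrow> mean_pos M f < mean_neg M f"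
  unfolding mean_exists_def ext_mean_def
  by (cases "mean_pos M f"; cases "mean_neg M f") (auto simp: ennreal_less_iff)

lemma ext_mean_greater_0D: "mean_exists M f \<Longrightarrow> ext_mean M f > 0 \<Longrightarrow> mean_neg M f < mean_pos M f"
  unfolding mean_exists_def ext_mean_def
  by (cases "mean_pos M f"; cases "mean_neg M f") (auto simp: ennreal_less_iff)

lemma ext_mean_eq_0D:
  "mean_exists M f \<Longrightarrow> ext_mean M f = 0 \<Longrightarrow> mean_pos M f = mean_neg M f \<and> mean_pos M f \<noteq> \<infinity>"
  unfolding mean_exists_def ext_mean_def
  by (cases "mean_pos M f"; cases "mean_neg M f") auto

context ergodic_sequence_law
begin

lemma rg_class_FF_if_mean_neg:
  assumes "mean_exists \<mu> (\<lambda>x. x 0)" "ext_mean \<mu> (\<lambda>x. x 0) < 0"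
  shows "AE x in \<mu>. \<forall>C \<in> rg_components x. class_FF x C"
proof -
  have "AE x in \<mu>. (\<forall>V. \<exists>N. \<forall>n\<ge>N. psum x n < V) \<and> (\<forall>V. \<exists>N. \<forall>n\<le>N. V < psum x n)"
    using psum_drift[of 1] ext_mean_less_0D[OF assms] by simp
  then show ?thesis
    by (rule eventually_mono) (auto simp: rg_components_def class_FF_def rg_component_finite)
qed

lemma rg_class_IF_if_mean_pos:
  assumes "mean_exists \<mu> (\<lambda>x. x 0)" "ext_mean \<mu> (\<lambda>x. x 0) > 0"
  shows "AE x in \<mu>. rg_connected x \<and> (\<forall>C \<in> rg_components x. class_IF x C)"
proof -
  have drift: "AE x in \<mu>. (\<forall>V. \<exists>N. \<forall>n\<ge>N. - psum x n < V) \<and> (\<forall>V. \<exists>N. \<forall>n\<le>N. V < - psum x n)"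
    using psum_drift[of "-1"] ext_mean_greater_0D[OF assms]
    by (simp add: mean_pos_uminus mean_neg_uminus)
  from drift foils_finite_if_bdd_below show ?thesis
  proof eventually_elim
    case (elim x)
    then have "(\<forall>V. \<exists>N. \<forall>n\<ge>N. V < psum x n) \<and> (\<forall>V. \<exists>N. \<forall>n\<le>N. psum x n < V)"
      using all_ex_uminus_less_iff[of "\<lambda>N n. N \<le> n" "psum x"]
        all_ex_uminus_less_iff[of "\<lambda>N n. n \<le> N" "\<lambda>n. - psum x n"] by simp
    then show ?case
      using rg_class_IF no_fixed_points_if_psum_tends_to_top past_maxima_unbounded_below elim(2)
      by blast
  qed
qed

lemma rg_class_IF_or_II_if_mean_zero:
  assumes "mean_exists \<mu> (\<lambda>x. x 0)" "ext_mean \<mu> (\<lambda>x. x 0) = 0"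
  shows "AE x in \<mu>. rg_connected x \<and> (\<forall>C \<in> rg_components x. class_IF x C \<or> class_II x C)"
proof -
  have "AE x in \<mu>. no_fixed_points x"
    using ext_mean_eq_0D[OF assms] by (intro no_fixed_points_if_mean_zero) auto
  moreover have "AE x in \<mu>. \<not> (past_maxima x \<noteq> {} \<and> bdd_below (past_maxima x))"
    by (rule covariant_set_not_bdd_below) (simp_all add: past_maxima_shift_by)
  moreover have "AE x in \<mu>. \<not> (lowest_foil x \<noteq> {} \<and> bdd_below (lowest_foil x))"
    by (rule covariant_set_not_bdd_below) (simp_all add: lowest_foil_shift_by)
  ultimately show ?thesis using foils_finite_if_bdd_below
  proof eventually_elim
    case (elim x)
    show ?case
    proof (cases "past_maxima x = {}")
      case True
      then show ?thesis using rg_class_II[OF elim(1) True elim(3)] by blast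
    next
      case False
      then have "\<not> bdd_below (past_maxima x)" using elim(2) by blast
      then show ?thesis using rg_class_IF[OF elim(1) _ elim(4)] by simp
    qed
  qed
qed

end

lemma ergodic_sequence_law_lawI:
  assumes "prob_space M" "\<And>n. X n \<in> measurable M (count_space UNIV)"
    and "stationary M X" "ergodic M X"
  shows "ergodic_sequence_law (law M X)"
proof -
  have "(\<lambda>\<omega> n. X n \<omega>) \<in> measurable M seq_space"
    using assms(2) by (intro measurable_PiM_single') (auto simp: space_PiM)
  then show ?thesis
    using assms unfolding ergodic_sequence_law_def ergodic_sequence_law_axioms_def law_def
      stationary_def ergodic_def
    by (auto intro: prob_space.prob_space_distr)
qed

lemma
  assumes "\<And>n. X n \<in> measurable M (count_space UNIV)"
  shows mean_exists_law: "mean_exists (law M X) (\<lambda>x. x 0) = mean_exists M (X 0)"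
    and ext_mean_law: "ext_mean (law M X) (\<lambda>x. x 0) = ext_mean M (X 0)"
    and AE_law: "(AE x in law M X. P x) \<Longrightarrow> AE \<omega> in M. P (\<lambda>n. X n \<omega>)"
proof -
  have X [measurable]: "(\<lambda>\<omega> n. X n \<omega>) \<in> measurable M seq_space"
    using assms by (intro measurable_PiM_single') (auto simp: space_PiM)
  have nn: "(\<integral>\<^sup>+x. f (x 0) \<partial>law M X) = (\<integral>\<^sup>+\<omega>. f (X 0 \<omega>) \<partial>M)" for f :: "int \<Rightarrow> ennreal"
    unfolding law_def
    using measurable_compose[OF measurable_component_singleton[of 0 UNIV] measurable_count_space[of f]]
    by (subst nn_integral_distr) (simp_all add: o_def)
  have "mean_pos (law M X) (\<lambda>x. x 0) = mean_pos M (X 0)"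
    and "mean_neg (law M X) (\<lambda>x. x 0) = mean_neg M (X 0)"
    unfolding mean_pos_def mean_neg_def
    by (rule nn[of "\<lambda>k. ennreal (real_of_int (max 0 k))"],
        rule nn[of "\<lambda>k. ennreal (real_of_int (max 0 (- k)))"])
  then show "mean_exists (law M X) (\<lambda>x. x 0) = mean_exists M (X 0)"
    and "ext_mean (law M X) (\<lambda>x. x 0) = ext_mean M (X 0)"
    unfolding mean_exists_def ext_mean_def by simp_all
  show "(AE x in law M X. P x) \<Longrightarrow> AE \<omega> in M. P (\<lambda>n. X n \<omega>)"
    unfolding law_def by (rule AE_distrD[OF X])
qed

theorem theorem3p6:
  fixes M :: "'a measure" and X :: "int \<Rightarrow> 'a \<Rightarrow> int"
  assumes "prob_space M"
    and "\<And>n. X n \<in> measurable M (count_space UNIV)"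
    and "stationary M X" and "ergodic M X"
    and "mean_exists M (X 0)"
  shows "(ext_mean M (X 0) < 0 \<longrightarrow>
            (AE \<omega> in M. \<forall>C \<in> rg_components (\<lambda>n. X n \<omega>). class_FF (\<lambda>n. X n \<omega>) C))
       \<and> (ext_mean M (X 0) > 0 \<longrightarrow>
            (AE \<omega> in M. rg_connected (\<lambda>n. X n \<omega>) \<and>
               (\<forall>C \<in> rg_components (\<lambda>n. X n \<omega>). class_IF (\<lambda>n. X n \<omega>) C)))
       \<and> (ext_mean M (X 0) = 0 \<longrightarrow>
            (AE \<omega> in M. rg_connected (\<lambda>n. X n \<omega>) \<and>
               (\<forall>C \<in> rg_components (\<lambda>n. X n \<omega>).
                  class_IF (\<lambda>n. X n \<omega>) C \<or> class_II (\<lambda>n. X n \<omega>) C)))"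
proof -
  interpret ergodic_sequence_law "law M X"
    using assms(1-4) by (rule ergodic_sequence_law_lawI)
  have ex: "mean_exists (law M X) (\<lambda>x. x 0)" using assms(5) mean_exists_law[OF assms(2)] by simp
  note mean = ext_mean_law[OF assms(2)]
  show ?thesis
  proof (intro conjI impI)
    assume "ext_mean M (X 0) < 0"
    then show "AE \<omega> in M. \<forall>C \<in> rg_components (\<lambda>n. X n \<omega>). class_FF (\<lambda>n. X n \<omega>) C"
      using rg_class_FF_if_mean_neg[OF ex] mean by (intro AE_law[OF assms(2)]) simp
  next
    assume "ext_mean M (X 0) > 0"
    then show "AE \<omega> in M. rg_connected (\<lambda>n. X n \<omega>) \<and>
        (\<forall>C \<in> rg_components (\<lambda>n. X n \<omega>). class_IF (\<lambda>n. X n \<omega>) C)"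
      using rg_class_IF_if_mean_pos[OF ex] mean by (intro AE_law[OF assms(2)]) simp
  next
    assume "ext_mean M (X 0) = 0"
    then show "AE \<omega> in M. rg_connected (\<lambda>n. X n \<omega>) \<and> (\<forall>C \<in> rg_components (\<lambda>n. X n \<omega>).
        class_IF (\<lambda>n. X n \<omega>) C \<or> class_II (\<lambda>n. X n \<omega>) C)"
      using rg_class_IF_or_II_if_mean_zero[OF ex] mean by (intro AE_law[OF assms(2)]) simp
  qed
qed

end
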